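(* Let $L$ be a finite-dimensional Lie superalgebra, let $0\to R\to F\xrightarrow{\pi}L\to 0$ be a free presentation of $L$, and let $D=(R\cap F')/[F,R]$. Then: (1) $\dim D\le\dim\mathrm{Ker}(\lambda)$ whenever $(T,\lambda)\in C(L)$ is a universal element; (2) for every $(K,\psi)\in C(L)$, $\mathrm{Ker}(\psi)$ is a homomorphic image of $D$.
   Context: Lie superalgebras over a field of characteristic $\neq 2,3$; homomorphisms are even. A free presentation of $L$ is a free Lie superalgebra $F$ on a $\mathbb{Z}_2$-graded set with a surjective homomorphism $\pi:F\to L$, $R=\mathrm{Ker}(\pi)$; $F'=[F,F]$. $C(L)$ is the class of pairs $(K,\lambda)$ with $\lambda:K\to L$ a surjective homomorphism and $\mathrm{Ker}(\lambda)\subseteq[K,K]\cap Z(K)$, where $Z(K)$ is the center. $(T,\sigma)\in C(L)$ is universal if for every $(K,\lambda)\in C(L)$ there is a homomorphism $\tau:T\to K$ with $\lambda\circ\tau=\sigma$. *)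

theory Defs
  imports "HOL.Vector_Spaces"
begin

text \<open>A Lie superalgebra over the field 'k, realised inside an ambient vector space
  (a type 'a with a scalar multiplication sc making it a 'k-vector space):
  carrier subspace carr = ev + od (direct), with a super bracket br.\<close>

record ('k, 'a) lsa =
  sc   :: "'k \<Rightarrow> 'a \<Rightarrow> 'a"
  carr :: "'a set"
  ev   :: "'a set"
  od   :: "'a set"
  br   :: "'a \<Rightarrow> 'a \<Rightarrow> 'a"

definition par :: "('k, 'a) lsa \<Rightarrow> bool \<Rightarrow> 'a set" where
  "par A p = (if p then od A else ev A)"

definition sgn_if :: "bool \<Rightarrow> 'a::ab_group_add \<Rightarrow> 'a" where
  "sgn_if b v = (if b then - v else v)"

definition lie_superalgebra :: "('k::field, 'a::ab_group_add) lsa \<Rightarrow> bool" where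
  "lie_superalgebra A \<longleftrightarrow>
     vector_space (sc A) \<and>
     module.subspace (sc A) (carr A) \<and>
     module.subspace (sc A) (ev A) \<and> module.subspace (sc A) (od A) \<and>
     ev A \<inter> od A = {0} \<and>
     carr A = {x + y | x y. x \<in> ev A \<and> y \<in> od A} \<and>
     (\<forall>x\<in>carr A. \<forall>y\<in>carr A. br A x y \<in> carr A) \<and>
     (\<forall>x\<in>carr A. \<forall>y\<in>carr A. \<forall>z\<in>carr A.
        br A (x + y) z = br A x z + br A y z \<and> br A z (x + y) = br A z x + br A z y) \<and>
     (\<forall>c. \<forall>x\<in>carr A. \<forall>y\<in>carr A.
        br A (sc A c x) y = sc A c (br A x y) \<and> br A x (sc A c y) = sc A c (br A x y)) \<and>
     (\<forall>p q. \<forall>x\<in>par A p. \<forall>y\<in>par A q. br A x y \<in> par A (p \<noteq> q)) \<and>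
     (\<forall>p q. \<forall>x\<in>par A p. \<forall>y\<in>par A q. br A x y = - sgn_if (p \<and> q) (br A y x)) \<and>
     (\<forall>p q r. \<forall>x\<in>par A p. \<forall>y\<in>par A q. \<forall>z\<in>par A r.
        sgn_if (p \<and> r) (br A x (br A y z)) + sgn_if (q \<and> p) (br A y (br A z x))
        + sgn_if (r \<and> q) (br A z (br A x y)) = 0)"

definition finite_dim :: "('k::field, 'a::ab_group_add) lsa \<Rightarrow> bool" where
  "finite_dim A \<longleftrightarrow> (\<exists>B. finite B \<and> B \<subseteq> carr A \<and> carr A \<subseteq> module.span (sc A) B)"

definition lsa_hom :: "('k::field, 'a::ab_group_add) lsa \<Rightarrow> ('k, 'b::ab_group_add) lsa
     \<Rightarrow> ('a \<Rightarrow> 'b) \<Rightarrow> bool" where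
  "lsa_hom A B f \<longleftrightarrow>
     f ` carr A \<subseteq> carr B \<and> f ` ev A \<subseteq> ev B \<and> f ` od A \<subseteq> od B \<and>
     (\<forall>x\<in>carr A. \<forall>y\<in>carr A. f (x + y) = f x + f y) \<and>
     (\<forall>c. \<forall>x\<in>carr A. f (sc A c x) = sc B c (f x)) \<and>
     (\<forall>x\<in>carr A. \<forall>y\<in>carr A. f (br A x y) = br B (f x) (f y))"

definition lsa_ker :: "('k, 'a) lsa \<Rightarrow> ('a \<Rightarrow> 'b::zero) \<Rightarrow> 'a set" where
  "lsa_ker A f = {x \<in> carr A. f x = 0}"

definition brs :: "('k::field, 'a::ab_group_add) lsa \<Rightarrow> 'a set \<Rightarrow> 'a set \<Rightarrow> 'a set" where
  "brs A I J = module.span (sc A) {br A x y | x y. x \<in> I \<and> y \<in> J}"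

definition center :: "('k, 'a::zero) lsa \<Rightarrow> 'a set" where
  "center A = {z \<in> carr A. \<forall>x\<in>carr A. br A z x = 0}"

definition in_C :: "('k::field, 'l::ab_group_add) lsa \<Rightarrow> ('k, 'a::ab_group_add) lsa
     \<Rightarrow> ('a \<Rightarrow> 'l) \<Rightarrow> bool" where
  "in_C L K lam \<longleftrightarrow> lie_superalgebra K \<and> lsa_hom K L lam \<and> lam ` carr K = carr L \<and>
     lsa_ker K lam \<subseteq> brs K (carr K) (carr K) \<inter> center K"

text \<open>universality of (T, sigma) in C(L), tested against all (K, lam) in C(L) whose
  underlying ambient type is 'm\<close>
definition universal_wrt :: "'m::ab_group_add itself \<Rightarrow> ('k::field, 'l::ab_group_add) lsa
     \<Rightarrow> ('k, 't::ab_group_add) lsa \<Rightarrow> ('t \<Rightarrow> 'l) \<Rightarrow> bool" where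
  "universal_wrt _ L T sigma \<longleftrightarrow> in_C L T sigma \<and>
     (\<forall>(K :: ('k, 'm::ab_group_add) lsa) lam. in_C L K lam \<longrightarrow>
        (\<exists>tau. lsa_hom T K tau \<and> (\<forall>x\<in>carr T. lam (tau x) = sigma x)))"

text \<open>F is the free Lie superalgebra on the Z2-graded set X = X0 (even) \<union> X1 (odd),
  identified with its image in F; universal property tested against all Lie
  superalgebras with ambient type 'm\<close>
definition free_wrt :: "'m::ab_group_add itself \<Rightarrow> ('k::field, 'f::ab_group_add) lsa \<Rightarrow> 'f set \<Rightarrow> 'f set \<Rightarrow> bool" where
  "free_wrt _ F X0 X1 \<longleftrightarrow> lie_superalgebra F \<and> X0 \<subseteq> ev F \<and> X1 \<subseteq> od F \<and> X0 \<inter> X1 = {} \<and>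
     (\<forall>(M :: ('k, 'm::ab_group_add) lsa) g. lie_superalgebra M \<and> g ` X0 \<subseteq> ev M \<and> g ` X1 \<subseteq> od M \<longrightarrow>
        (\<exists>phi. lsa_hom F M phi \<and> (\<forall>x\<in>X0 \<union> X1. phi x = g x)) \<and>
        (\<forall>phi phi'. lsa_hom F M phi \<and> lsa_hom F M phi' \<and> (\<forall>x\<in>X0 \<union> X1. phi x = g x \<and> phi' x = g x)
           \<longrightarrow> (\<forall>y\<in>carr F. phi y = phi' y)))"

text \<open>dimension of the quotient space U/W (W \<subseteq> U), as the least size of a finite
  set B \<subseteq> U with U \<subseteq> span (B \<union> W)\<close>
definition quot_dim :: "('k::field \<Rightarrow> 'a::ab_group_add \<Rightarrow> 'a) \<Rightarrow> 'a set \<Rightarrow> 'a set \<Rightarrow> nat" where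
  "quot_dim s U W = (LEAST n. \<exists>B. finite B \<and> card B = n \<and> B \<subseteq> U \<and> U \<subseteq> module.span s (B \<union> W))"

text \<open>h : U \<rightarrow> carr B induces an (even) homomorphism of Lie superalgebras from the quotient
  U/W (U a subalgebra of A, W an ideal of U) to B: the literal unfolding of a
  homomorphism out of a quotient.\<close>
definition quot_hom :: "('k::field, 'a::ab_group_add) lsa \<Rightarrow> 'a set \<Rightarrow> 'a set
     \<Rightarrow> ('k, 'b::ab_group_add) lsa \<Rightarrow> ('a \<Rightarrow> 'b) \<Rightarrow> bool" where
  "quot_hom A U W B h \<longleftrightarrow>
     h ` U \<subseteq> carr B \<and> h ` (U \<inter> ev A) \<subseteq> ev B \<and> h ` (U \<inter> od A) \<subseteq> od B \<and>
     (\<forall>x\<in>U. \<forall>y\<in>U. h (x + y) = h x + h y) \<and>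
     (\<forall>c. \<forall>x\<in>U. h (sc A c x) = sc B c (h x)) \<and>
     (\<forall>x\<in>W. h x = 0) \<and>
     (\<forall>x\<in>U. \<forall>y\<in>U. h (br A x y) = br B (h x) (h y))"

end

theory Submission
  imports Defs
begin

(*
  Write R = Ker pi and F' = [F,F], so that D = (R \<inter> F')/[F,R] is the multiplier of L.
  Choosing a graded complement of (R \<inter> F')/[F,R] in R/[F,R] yields a graded ideal M with
  [F,R] \<subseteq> M \<subseteq> R, M \<inter> F' = [F,R] and R = (R \<inter> F') + M.  The quotient F/M, mapped to L by pi, lies in C(L):
  its kernel R/M is central because [F,R] \<subseteq> M, and lies in the derived algebra because
  R = (R \<inter> F') + M.  Moreover R/M is isomorphic to D.

  If (K, psi) is in C(L) and beta is a homomorphism into K such that psi o beta is onto L, then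
  K = image of beta + Z(K), so [K,K] is the image of the derived algebra of the source and
  Ker psi is the image of the kernel of psi o beta.  Applied to a universal (T, lam) and F/M,
  this maps Ker lam onto a copy of D, which gives (1); Ker lam is finite-dimensional because
  [T,T] is spanned by the brackets of finitely many lifts of a basis of L.  For (2), freeness
  of F lifts pi to beta : F -> K with psi o beta = pi; beta kills [F,R] because beta(R) is
  central, and maps R \<inter> F' onto Ker psi by the argument above.
*)

section \<open>Linear algebra\<close>

lemma (in vector_space) subspace_complement_exists:
  assumes U: "subspace U" and V: "subspace V" and UV: "U \<subseteq> V"
  obtains C where "subspace C" "C \<subseteq> V" "U \<inter> C \<subseteq> {0}" "\<forall>x\<in>V. \<exists>u\<in>U. \<exists>c\<in>C. x = u + c"
proof -
  obtain BU where BU: "BU \<subseteq> U" "independent BU" "U \<subseteq> span BU"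
    using maximal_independent_subset by blast
  obtain B where B: "BU \<subseteq> B" "B \<subseteq> V" "independent B" "V \<subseteq> span B"
    using maximal_independent_subset_extend[of BU V] BU UV by blast
  have span_BU: "span BU = U" using BU U span_subspace by blast
  define C where "C = span (B - BU)"
  have "U \<inter> C \<subseteq> {0}"
  proof
    fix x assume x: "x \<in> U \<inter> C"
    have x_BU: "x \<in> span BU" and x_C: "x \<in> span (B - BU)" using x span_BU C_def by auto
    have "representation B x = representation BU x"
      by (rule representation_extend[OF B(3) x_BU B(1)])
    moreover have "representation B x = representation (B - BU) x"
      by (rule representation_extend[OF B(3) x_C]) auto
    ultimately have "representation B x b = 0" for b
      using representation_ne_zero[of BU x b] representation_ne_zero[of "B - BU" x b] by (metis DiffD2)
    moreover have "x = (\<Sum>b | representation B x b \<noteq> 0. representation B x b *s b)"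
      using sum_nonzero_representation_eq[OF B(3)] x_BU span_mono[OF B(1)] by auto
    ultimately show "x \<in> {0}" by simp
  qed
  moreover have "C \<subseteq> V" unfolding C_def using B V by (meson Diff_subset span_minimal subset_trans)
  moreover have "\<forall>x\<in>V. \<exists>u\<in>U. \<exists>c\<in>C. x = u + c"
  proof
    fix x assume "x \<in> V"
    then have "x \<in> span (BU \<union> (B - BU))" using B by (metis Un_Diff_cancel sup.absorb2 subsetD)
    then show "\<exists>u\<in>U. \<exists>c\<in>C. x = u + c" unfolding span_Un span_BU C_def by blast
  qed
  ultimately show ?thesis using that[of C] by (simp add: C_def)
qed

lemma image_span_on_subspace:
  fixes s1 :: "'k::comm_ring_1 \<Rightarrow> 'a::ab_group_add \<Rightarrow> 'a" and s2 :: "'k \<Rightarrow> 'b::ab_group_add \<Rightarrow> 'b"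
  assumes m1: "module s1" and m2: "module s2" and C: "module.subspace s1 C" and SC: "S \<subseteq> C"
    and add: "\<forall>x\<in>C. \<forall>y\<in>C. f (x + y) = f x + f y"
    and scale: "\<forall>c. \<forall>x\<in>C. f (s1 c x) = s2 c (f x)"
  shows "f ` module.span s1 S = module.span s2 (f ` S)"
proof -
  have f0: "f 0 = 0" using add module.subspace_0[OF m1 C] by (metis add.right_neutral add_left_imp_eq)
  have span_C: "module.span s1 S \<subseteq> C" using module.span_minimal[OF m1 SC C] .
  have "f x \<in> module.span s2 (f ` S) \<and> x \<in> C" if x: "x \<in> module.span s1 S" for x
  proof (rule module.span_induct_alt[OF m1 x])
    show "f 0 \<in> module.span s2 (f ` S) \<and> 0 \<in> C"
      using f0 module.span_zero[OF m2] module.subspace_0[OF m1 C] by simp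
  next
    fix c a x assume a: "a \<in> S" and x: "f x \<in> module.span s2 (f ` S) \<and> x \<in> C"
    have ca: "s1 c a \<in> C" using a SC module.subspace_scale[OF m1 C] by blast
    then have "f (s1 c a + x) = s2 c (f a) + f x" using a x add scale SC by auto
    then show "f (s1 c a + x) \<in> module.span s2 (f ` S) \<and> s1 c a + x \<in> C"
      using a x ca module.subspace_add[OF m1 C]
        module.span_add[OF m2] module.span_scale[OF m2] module.span_base[OF m2] by auto
  qed
  moreover have "y \<in> f ` module.span s1 S" if y: "y \<in> module.span s2 (f ` S)" for y
  proof (rule module.span_induct_alt[OF m2 y])
    show "0 \<in> f ` module.span s1 S" using f0 module.span_zero[OF m1] by force
  next
    fix c b y assume b: "b \<in> f ` S" and y: "y \<in> f ` module.span s1 S"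
    then obtain a x where a: "a \<in> S" "b = f a" and x: "x \<in> module.span s1 S" "y = f x" by blast
    then have "f (s1 c a + x) = s2 c b + y"
      using add scale SC span_C module.subspace_scale[OF m1 C] by (simp add: subset_iff)
    moreover have "s1 c a + x \<in> module.span s1 S"
      using a x module.span_add[OF m1] module.span_scale[OF m1] module.span_base[OF m1] by blast
    ultimately show "s2 c b + y \<in> f ` module.span s1 S" by (metis image_eqI)
  qed
  ultimately show ?thesis by blast
qed

lemma quot_dim_le_card_image:
  fixes s1 :: "'k::field \<Rightarrow> 'a::ab_group_add \<Rightarrow> 'a" and s2 :: "'k \<Rightarrow> 'b::ab_group_add \<Rightarrow> 'b"
  assumes m1: "module s1" and m2: "module s2" and U: "module.subspace s1 U"
    and add: "\<forall>x\<in>U. \<forall>y\<in>U. f (x + y) = f x + f y"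
    and scale: "\<forall>c. \<forall>x\<in>U. f (s1 c x) = s2 c (f x)"
    and E: "finite E" "E \<subseteq> f ` U" "f ` U \<subseteq> module.span s2 E"
    and ker: "\<forall>x\<in>U. f x = 0 \<longrightarrow> x \<in> W"
  shows "quot_dim s1 U W \<le> card E"
proof -
  have "\<forall>e\<in>E. \<exists>x. x \<in> U \<and> f x = e" using E(2) by blast
  then obtain g where g: "\<forall>e\<in>E. g e \<in> U \<and> f (g e) = e" by metis
  define B where "B = g ` E"
  have B: "B \<subseteq> U" "f ` B = E" "finite B" "card B \<le> card E"
    unfolding B_def using g E(1) card_image_le by (auto simp: image_image)
  have "U \<subseteq> module.span s1 (B \<union> W)"
  proof
    fix x assume x: "x \<in> U"
    have "f x \<in> f ` module.span s1 B"
      using image_span_on_subspace[OF m1 m2 U B(1) add scale] B(2) E(3) x by auto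
    then obtain y where y: "y \<in> module.span s1 B" "f y = f x" by auto
    have yU: "y \<in> U" using y(1) module.span_minimal[OF m1 B(1) U] by blast
    have xy: "x - y \<in> U" using module.subspace_diff[OF m1 U x yU] .
    have "f x = f (x - y) + f y" using add xy yU by (metis diff_add_cancel)
    then have "x - y \<in> W" using ker xy y(2) by simp
    then have "x - y \<in> module.span s1 (B \<union> W)" by (simp add: module.span_base[OF m1])
    moreover have "y \<in> module.span s1 (B \<union> W)" using y(1) module.span_mono[OF m1] by blast
    ultimately have "(x - y) + y \<in> module.span s1 (B \<union> W)" by (rule module.span_add[OF m1])
    then show "x \<in> module.span s1 (B \<union> W)" by simp
  qed
  then have "quot_dim s1 U W \<le> card B"
    unfolding quot_dim_def using B by (intro Least_le) blast
  then show ?thesis using B(4) by simp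
qed

section \<open>Lie superalgebras and their homomorphisms\<close>

lemma par_simps [simp]: "par A False = ev A" "par A True = od A"
  by (simp_all add: par_def)

lemma sgn_if_simps [simp]: "sgn_if True v = - v" "sgn_if False v = v"
  by (simp_all add: sgn_if_def)

lemma lsa_hom_carr: "lsa_hom A B f \<Longrightarrow> x \<in> carr A \<Longrightarrow> f x \<in> carr B"
  and lsa_hom_ev: "lsa_hom A B f \<Longrightarrow> x \<in> ev A \<Longrightarrow> f x \<in> ev B"
  and lsa_hom_od: "lsa_hom A B f \<Longrightarrow> x \<in> od A \<Longrightarrow> f x \<in> od B"
  and lsa_hom_add: "lsa_hom A B f \<Longrightarrow> x \<in> carr A \<Longrightarrow> y \<in> carr A \<Longrightarrow> f (x + y) = f x + f y"
  and lsa_hom_scale: "lsa_hom A B f \<Longrightarrow> x \<in> carr A \<Longrightarrow> f (sc A c x) = sc B c (f x)"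
  and lsa_hom_br: "lsa_hom A B f \<Longrightarrow> x \<in> carr A \<Longrightarrow> y \<in> carr A \<Longrightarrow> f (br A x y) = br B (f x) (f y)"
  unfolding lsa_hom_def by blast+

lemma lsa_hom_par: "lsa_hom A B f \<Longrightarrow> x \<in> par A p \<Longrightarrow> f x \<in> par B p"
  using lsa_hom_ev lsa_hom_od by (cases p) auto

lemma lsa_hom_comp: "lsa_hom A B f \<Longrightarrow> lsa_hom B C g \<Longrightarrow> lsa_hom A C (\<lambda>x. g (f x))"
  unfolding lsa_hom_def by (auto simp: image_subset_iff)

lemma quot_hom_of_lsa_hom:
  assumes "lsa_hom A B f" "U \<subseteq> carr A" "\<forall>x\<in>W. f x = 0"
  shows "quot_hom A U W B f"
  using assms unfolding lsa_hom_def quot_hom_def by (auto simp: subset_iff)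

locale lie_superalg =
  fixes A :: "('k::field, 'a::ab_group_add) lsa"
  assumes lie_superalgebra: "lie_superalgebra A"
begin

lemma vector_space_sc: "vector_space (sc A)"
  using lie_superalgebra by (simp add: lie_superalgebra_def)

lemma module_sc: "module (sc A)"
  using vector_space_sc module_iff_vector_space by blast

sublocale vector_space "sc A"
  by (rule vector_space_sc)

lemma lie_superalgebraE:
  obtains "subspace (carr A)" "subspace (ev A)" "subspace (od A)"
    "ev A \<inter> od A = {0}" "carr A = {x + y | x y. x \<in> ev A \<and> y \<in> od A}"
    "\<forall>x\<in>carr A. \<forall>y\<in>carr A. br A x y \<in> carr A"
    "\<forall>x\<in>carr A. \<forall>y\<in>carr A. \<forall>z\<in>carr A.
        br A (x + y) z = br A x z + br A y z \<and> br A z (x + y) = br A z x + br A z y"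
    "\<forall>c. \<forall>x\<in>carr A. \<forall>y\<in>carr A.
        br A (sc A c x) y = sc A c (br A x y) \<and> br A x (sc A c y) = sc A c (br A x y)"
    "\<forall>p q. \<forall>x\<in>par A p. \<forall>y\<in>par A q. br A x y \<in> par A (p \<noteq> q)"
    "\<forall>p q. \<forall>x\<in>par A p. \<forall>y\<in>par A q. br A x y = - sgn_if (p \<and> q) (br A y x)"
    "\<forall>p q r. \<forall>x\<in>par A p. \<forall>y\<in>par A q. \<forall>z\<in>par A r.
        sgn_if (p \<and> r) (br A x (br A y z)) + sgn_if (q \<and> p) (br A y (br A z x))
        + sgn_if (r \<and> q) (br A z (br A x y)) = 0"
  using lie_superalgebra unfolding lie_superalgebra_def by (elim conjE) (rule that; assumption)

lemma subspace_carr: "subspace (carr A)"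
  by (rule lie_superalgebraE)

lemma subspace_ev: "subspace (ev A)"
  by (rule lie_superalgebraE)

lemma subspace_od: "subspace (od A)"
  by (rule lie_superalgebraE)

lemma ev_inter_od: "ev A \<inter> od A = {0}"
  by (rule lie_superalgebraE)

lemma carr_eq: "carr A = {x + y | x y. x \<in> ev A \<and> y \<in> od A}"
  by (rule lie_superalgebraE)

lemma br_closed: "x \<in> carr A \<Longrightarrow> y \<in> carr A \<Longrightarrow> br A x y \<in> carr A"
  by (rule lie_superalgebraE) blast

lemma br_add_left: "x \<in> carr A \<Longrightarrow> y \<in> carr A \<Longrightarrow> z \<in> carr A \<Longrightarrow> br A (x + y) z = br A x z + br A y z"
  by (rule lie_superalgebraE) blast

lemma br_add_right: "x \<in> carr A \<Longrightarrow> y \<in> carr A \<Longrightarrow> z \<in> carr A \<Longrightarrow> br A z (x + y) = br A z x + br A z y"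
  by (rule lie_superalgebraE) blast

lemma br_scale_left: "x \<in> carr A \<Longrightarrow> y \<in> carr A \<Longrightarrow> br A (sc A c x) y = sc A c (br A x y)"
  by (rule lie_superalgebraE) blast

lemma br_scale_right: "x \<in> carr A \<Longrightarrow> y \<in> carr A \<Longrightarrow> br A x (sc A c y) = sc A c (br A x y)"
  by (rule lie_superalgebraE) blast

lemma br_par: "x \<in> par A p \<Longrightarrow> y \<in> par A q \<Longrightarrow> br A x y \<in> par A (p \<noteq> q)"
  by (rule lie_superalgebraE) blast

lemma br_skew: "x \<in> par A p \<Longrightarrow> y \<in> par A q \<Longrightarrow> br A x y = - sgn_if (p \<and> q) (br A y x)"
  by (rule lie_superalgebraE) blast

lemma jacobi:
  assumes "x \<in> par A p" "y \<in> par A q" "z \<in> par A r"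
  shows "sgn_if (p \<and> r) (br A x (br A y z)) + sgn_if (q \<and> p) (br A y (br A z x))
      + sgn_if (r \<and> q) (br A z (br A x y)) = 0"
proof -
  have "\<forall>p q r. \<forall>x\<in>par A p. \<forall>y\<in>par A q. \<forall>z\<in>par A r.
      sgn_if (p \<and> r) (br A x (br A y z)) + sgn_if (q \<and> p) (br A y (br A z x))
      + sgn_if (r \<and> q) (br A z (br A x y)) = 0"
    by (rule lie_superalgebraE)
  then show ?thesis using assms by blast
qed

lemma zero_ev: "0 \<in> ev A" and zero_od: "0 \<in> od A" and zero_carr: "0 \<in> carr A"
  using subspace_0 subspace_ev subspace_od subspace_carr by blast+

lemma ev_carr: "x \<in> ev A \<Longrightarrow> x \<in> carr A"
  using carr_eq zero_od by force

lemma od_carr: "x \<in> od A \<Longrightarrow> x \<in> carr A"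
  using carr_eq zero_ev by force

lemma par_carr: "x \<in> par A p \<Longrightarrow> x \<in> carr A"
  by (cases p) (auto intro: ev_carr od_carr)

lemma carr_add: "x \<in> carr A \<Longrightarrow> y \<in> carr A \<Longrightarrow> x + y \<in> carr A"
  and carr_diff: "x \<in> carr A \<Longrightarrow> y \<in> carr A \<Longrightarrow> x - y \<in> carr A"
  and carr_neg: "x \<in> carr A \<Longrightarrow> - x \<in> carr A"
  and carr_scale: "x \<in> carr A \<Longrightarrow> sc A c x \<in> carr A"
  using subspace_carr subspace_add subspace_diff subspace_neg subspace_scale by blast+

lemma carr_sgn_if: "x \<in> carr A \<Longrightarrow> sgn_if b x \<in> carr A"
  using carr_neg by (cases b) simp_all

lemma par_add: "x \<in> par A p \<Longrightarrow> y \<in> par A p \<Longrightarrow> x + y \<in> par A p"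
  and par_diff: "x \<in> par A p \<Longrightarrow> y \<in> par A p \<Longrightarrow> x - y \<in> par A p"
  and par_neg: "x \<in> par A p \<Longrightarrow> - x \<in> par A p"
  and par_scale: "x \<in> par A p \<Longrightarrow> sc A c x \<in> par A p"
  using subspace_ev subspace_od subspace_add subspace_diff subspace_neg subspace_scale
  by (cases p; simp)+

lemma br_zero_left: "y \<in> carr A \<Longrightarrow> br A 0 y = 0"
  using br_add_left[OF zero_carr zero_carr, of y] by simp

lemma br_zero_right: "y \<in> carr A \<Longrightarrow> br A y 0 = 0"
  using br_add_right[OF zero_carr zero_carr, of y] by simp

lemma br_diff_left: "x \<in> carr A \<Longrightarrow> y \<in> carr A \<Longrightarrow> z \<in> carr A \<Longrightarrow> br A (x - y) z = br A x z - br A y z"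
  using br_add_left[OF carr_diff, of x y y z] by (simp add: eq_diff_eq)

lemma br_diff_right: "x \<in> carr A \<Longrightarrow> y \<in> carr A \<Longrightarrow> z \<in> carr A \<Longrightarrow> br A z (x - y) = br A z x - br A z y"
  using br_add_right[OF carr_diff, of x y y z] by (simp add: eq_diff_eq)

lemma carr_decomp: "x \<in> carr A \<Longrightarrow> \<exists>a b. a \<in> ev A \<and> b \<in> od A \<and> x = a + b"
  using carr_eq by blast

lemma decomp_unique:
  assumes "a \<in> ev A" "b \<in> od A" "a' \<in> ev A" "b' \<in> od A" "a + b = a' + b'"
  shows "a = a' \<and> b = b'"
proof -
  have "b' - b = a - a'" using assms(5) by (simp add: algebra_simps)
  moreover have "a - a' \<in> ev A" "b' - b \<in> od A"
    using par_diff[of _ False] par_diff[of _ True] assms by simp_all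
  ultimately have "b' - b \<in> ev A \<inter> od A" by simp
  then have "b' - b = 0" using ev_inter_od by blast
  then show ?thesis using assms(5) by simp
qed

lemma homogeneous_sum_eq_zero:
  assumes "u \<in> par A p" "v \<in> par A (\<not> p)" "u + v = 0"
  shows "u = 0 \<and> v = 0"
proof (cases p)
  case True
  have "v + u = 0 + 0" using assms(3) by (simp add: add.commute)
  then show ?thesis using decomp_unique[of v u 0 0] zero_ev zero_od assms(1,2) True by simp
next
  case False
  then show ?thesis using decomp_unique[of u v 0 0] zero_ev zero_od assms by simp
qed

lemma center_br_left: "z \<in> center A \<Longrightarrow> x \<in> carr A \<Longrightarrow> br A z x = 0"
  by (simp add: center_def)

(* center is defined by vanishing left brackets; the right brackets vanish by super
   skew-symmetry, applied to homogeneous components. *)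
lemma center_br_right:
  assumes z: "z \<in> center A" and x: "x \<in> carr A"
  shows "br A x z = 0"
proof -
  have zc: "z \<in> carr A" using z by (simp add: center_def)
  obtain z0 z1 where z01: "z0 \<in> ev A" "z1 \<in> od A" "z = z0 + z1" using carr_decomp[OF zc] by blast
  have components: "br A z0 y = 0 \<and> br A z1 y = 0" if y: "y \<in> par A q" for y q
  proof -
    have "br A z0 y + br A z1 y = 0"
      using center_br_left[OF z par_carr[OF y]] br_add_left[OF ev_carr od_carr par_carr[OF y]] z01 by simp
    moreover have "br A z0 y \<in> par A q" "br A z1 y \<in> par A (\<not> q)"
      using br_par[of z0 False y q] br_par[of z1 True y q] z01 y by simp_all
    ultimately show ?thesis using homogeneous_sum_eq_zero by blast
  qed
  have homogeneous: "br A y z = 0" if y: "y \<in> par A q" for y q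
    using br_skew[OF y, of z0 False] br_skew[OF y, of z1 True] components[OF y] z01
      br_add_right[OF ev_carr od_carr par_carr[OF y]] by (simp add: sgn_if_def)
  obtain x0 x1 where "x0 \<in> ev A" "x1 \<in> od A" "x = x0 + x1" using carr_decomp[OF x] by blast
  then show ?thesis
    using br_add_left[OF ev_carr od_carr zc] homogeneous[of x0 False] homogeneous[of x1 True] by simp
qed

lemma span_subset_carr: "S \<subseteq> carr A \<Longrightarrow> span S \<subseteq> carr A"
  using span_minimal subspace_carr by blast

lemma lsa_hom_zero: "lsa_hom A B f \<Longrightarrow> f 0 = 0"
  using lsa_hom_add[OF _ zero_carr zero_carr] by simp

lemma lsa_hom_diff:
  "lsa_hom A B f \<Longrightarrow> x \<in> carr A \<Longrightarrow> y \<in> carr A \<Longrightarrow> f (x - y) = f x - f y"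
  using lsa_hom_add[OF _ carr_diff] by (metis diff_add_cancel eq_diff_eq)

lemma lsa_hom_image_span:
  assumes B: "lie_superalgebra B" and f: "lsa_hom A B f" and S: "S \<subseteq> carr A"
  shows "f ` span S = module.span (sc B) (f ` S)"
  by (rule image_span_on_subspace[OF module_sc lie_superalg.module_sc[OF lie_superalg.intro[OF B]]
        subspace_carr S]) (use f in \<open>simp_all add: lsa_hom_def\<close>)

lemma lsa_hom_image_brs:
  assumes B: "lie_superalgebra B" and f: "lsa_hom A B f" and X: "X \<subseteq> carr A" and Y: "Y \<subseteq> carr A"
  shows "f ` brs A X Y = brs B (f ` X) (f ` Y)"
proof -
  let ?G = "{br A x y | x y. x \<in> X \<and> y \<in> Y}"
  have "f (br A x y) = br B (f x) (f y)" if "x \<in> X" "y \<in> Y" for x y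
    using lsa_hom_br[OF f] X Y that by blast
  then have "f ` ?G = {br B u v | u v. u \<in> f ` X \<and> v \<in> f ` Y}" by (auto intro!: image_eqI)
  moreover have "?G \<subseteq> carr A" using X Y br_closed by blast
  ultimately show ?thesis unfolding brs_def using lsa_hom_image_span[OF B f] by simp
qed

lemma subspace_brs: "subspace (brs A X Y)"
  unfolding brs_def by (rule subspace_span)

lemma brs_subset_carr: "X \<subseteq> carr A \<Longrightarrow> Y \<subseteq> carr A \<Longrightarrow> brs A X Y \<subseteq> carr A"
  unfolding brs_def by (rule span_subset_carr) (use br_closed in blast)

lemma brs_span:
  assumes X: "X \<subseteq> carr A" and Y: "Y \<subseteq> carr A"
  shows "brs A (span X) (span Y) = brs A X Y"
proof
  have span_XY: "span X \<subseteq> carr A" "span Y \<subseteq> carr A" using X Y span_subset_carr by blast+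
  have linear_image: "g ` span S \<subseteq> brs A X Y"
    if S: "S \<subseteq> carr A" and g_S: "g ` S \<subseteq> brs A X Y"
      and "\<And>x y. x \<in> carr A \<Longrightarrow> y \<in> carr A \<Longrightarrow> g (x + y) = g x + g y"
      and "\<And>c x. x \<in> carr A \<Longrightarrow> g (sc A c x) = sc A c (g x)"
    for g and S
    using image_span_on_subspace[OF module_sc module_sc subspace_carr S, of g] that
      span_minimal[OF g_S subspace_brs] by simp
  have br_X_span_Y: "br A c y \<in> brs A X Y" if c: "c \<in> X" and y: "y \<in> span Y" for c y
  proof -
    have cc: "c \<in> carr A" using c X by blast
    have "br A c ` Y \<subseteq> brs A X Y" unfolding brs_def using c by (auto intro: span_base)
    from linear_image[OF Y this br_add_right[OF _ _ cc] br_scale_right[OF cc]] show ?thesis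
      using y by blast
  qed
  have br_span: "br A x y \<in> brs A X Y" if x: "x \<in> span X" and y: "y \<in> span Y" for x y
  proof -
    have yc: "y \<in> carr A" using y span_XY by blast
    have "(\<lambda>u. br A u y) ` X \<subseteq> brs A X Y" using br_X_span_Y y by blast
    from linear_image[OF X this br_add_left[OF _ _ yc] br_scale_left[OF _ yc]] show ?thesis
      using x by blast
  qed
  show "brs A (span X) (span Y) \<subseteq> brs A X Y"
    unfolding brs_def[of A "span X"] by (rule span_minimal[OF _ subspace_brs]) (use br_span in blast)
next
  show "brs A X Y \<subseteq> brs A (span X) (span Y)"
    unfolding brs_def by (rule span_mono) (use span_superset in blast)
qed

end

section \<open>Graded subspaces and graded ideals\<close>

definition graded_subspace :: "('k::field, 'a::ab_group_add) lsa \<Rightarrow> 'a set \<Rightarrow> bool" where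
  "graded_subspace A S \<longleftrightarrow> module.subspace (sc A) S \<and> S \<subseteq> carr A \<and>
     (\<forall>x\<in>S. \<exists>a b. a \<in> S \<inter> ev A \<and> b \<in> S \<inter> od A \<and> x = a + b)"

definition graded_ideal :: "('k::field, 'a::ab_group_add) lsa \<Rightarrow> 'a set \<Rightarrow> bool" where
  "graded_ideal A I \<longleftrightarrow> graded_subspace A I \<and> (\<forall>x\<in>carr A. \<forall>y\<in>I. br A x y \<in> I \<and> br A y x \<in> I)"

context lie_superalg
begin

lemma graded_subspace_components:
  assumes S: "graded_subspace A S" and "a \<in> ev A" "b \<in> od A" "a + b \<in> S"
  shows "a \<in> S" "b \<in> S"
proof -
  obtain a' b' where "a' \<in> S \<inter> ev A" "b' \<in> S \<inter> od A" "a + b = a' + b'"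
    using S assms(4) unfolding graded_subspace_def by blast
  with decomp_unique[OF assms(2,3)] show "a \<in> S" "b \<in> S" by auto
qed

lemma graded_subspace_carr: "graded_subspace A (carr A)"
  unfolding graded_subspace_def using subspace_carr carr_eq ev_carr od_carr by blast

lemma graded_subspace_span:
  assumes G: "G \<subseteq> ev A \<union> od A"
  shows "graded_subspace A (span G)"
proof -
  have "\<exists>a b. a \<in> span G \<inter> ev A \<and> b \<in> span G \<inter> od A \<and> x = a + b" if x: "x \<in> span G" for x
  proof (rule span_induct_alt[OF x])
    show "\<exists>a b. a \<in> span G \<inter> ev A \<and> b \<in> span G \<inter> od A \<and> 0 = a + b"
      using zero_ev zero_od span_zero by (intro exI[of _ 0]) auto
  next
    fix c g y assume g: "g \<in> G" and "\<exists>a b. a \<in> span G \<inter> ev A \<and> b \<in> span G \<inter> od A \<and> y = a + b"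
    then obtain a b where ab: "a \<in> span G \<inter> ev A" "b \<in> span G \<inter> od A" "y = a + b" by blast
    have cg: "sc A c g \<in> span G" using g span_base span_scale by blast
    show "\<exists>a b. a \<in> span G \<inter> ev A \<and> b \<in> span G \<inter> od A \<and> sc A c g + y = a + b"
    proof (cases "g \<in> ev A")
      case True
      then have "sc A c g + a \<in> span G \<inter> ev A" using ab cg par_scale[of g False] par_add[of _ False] span_add by auto
      then show ?thesis using ab by (intro exI[of _ "sc A c g + a"] exI[of _ b]) (auto simp: add.assoc)
    next
      case False
      then have "sc A c g + b \<in> span G \<inter> od A" using G g ab cg par_scale[of g True] par_add[of _ True] span_add by auto
      then show ?thesis using ab by (intro exI[of _ a] exI[of _ "sc A c g + b"]) (auto simp: algebra_simps)
    qed
  qed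
  moreover have "G \<subseteq> carr A" using G ev_carr od_carr by blast
  ultimately show ?thesis unfolding graded_subspace_def using span_subset_carr by blast
qed

lemma graded_subspace_Int:
  assumes S: "graded_subspace A S" and T: "graded_subspace A T"
  shows "graded_subspace A (S \<inter> T)"
proof -
  have "\<exists>a b. a \<in> S \<inter> T \<inter> ev A \<and> b \<in> S \<inter> T \<inter> od A \<and> x = a + b" if x: "x \<in> S \<inter> T" for x
  proof -
    obtain a b where ab: "a \<in> S \<inter> ev A" "b \<in> S \<inter> od A" "x = a + b"
      using S x unfolding graded_subspace_def by blast
    then have "a \<in> T" "b \<in> T" using graded_subspace_components[OF T] x by auto
    then show ?thesis using ab by blast
  qed
  then show ?thesis using S T subspace_inter unfolding graded_subspace_def by blast
qed

lemma graded_subspace_sums: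
  assumes S: "graded_subspace A S" and T: "graded_subspace A T"
  shows "graded_subspace A {x + y | x y. x \<in> S \<and> y \<in> T}"
proof -
  have "\<exists>a b. a \<in> {x + y | x y. x \<in> S \<and> y \<in> T} \<inter> ev A \<and> b \<in> {x + y | x y. x \<in> S \<and> y \<in> T} \<inter> od A
      \<and> z = a + b" if z: "z \<in> {x + y | x y. x \<in> S \<and> y \<in> T}" for z
  proof -
    obtain x y where xy: "x \<in> S" "y \<in> T" "z = x + y" using z by blast
    obtain a b where ab: "a \<in> S \<inter> ev A" "b \<in> S \<inter> od A" "x = a + b"
      using S xy unfolding graded_subspace_def by blast
    obtain a' b' where ab': "a' \<in> T \<inter> ev A" "b' \<in> T \<inter> od A" "y = a' + b'"
      using T xy unfolding graded_subspace_def by blast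
    have "a + a' \<in> ev A" "b + b' \<in> od A" using par_add[of _ False] par_add[of _ True] ab ab' by auto
    moreover have "z = (a + a') + (b + b')" using xy ab ab' by (simp add: algebra_simps)
    ultimately show ?thesis using ab ab' by blast
  qed
  moreover have "{x + y | x y. x \<in> S \<and> y \<in> T} \<subseteq> carr A"
    using S T carr_add unfolding graded_subspace_def by blast
  ultimately show ?thesis using S T subspace_sums unfolding graded_subspace_def by blast
qed

lemma graded_subspace_sums_homogeneous:
  assumes "subspace S" "S \<subseteq> ev A" "subspace T" "T \<subseteq> od A"
  shows "graded_subspace A {x + y | x y. x \<in> S \<and> y \<in> T}"
proof -
  have "graded_subspace A W" if W: "subspace W" "W \<subseteq> par A p" for W p
  proof -
    have "\<exists>a b. a \<in> W \<inter> ev A \<and> b \<in> W \<inter> od A \<and> x = a + b" if x: "x \<in> W" for x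
    proof (cases p)
      case False
      then show ?thesis using x W subspace_0 zero_od by (intro exI[of _ x] exI[of _ 0]) auto
    next
      case True
      then show ?thesis using x W subspace_0 zero_ev by (intro exI[of _ 0] exI[of _ x]) auto
    qed
    then show ?thesis using W par_carr unfolding graded_subspace_def by blast
  qed
  from this[of S False] this[of T True] show ?thesis
    using graded_subspace_sums assms by simp
qed

lemma graded_subspace_complement:
  assumes U: "graded_subspace A U" and V: "graded_subspace A V" and UV: "U \<subseteq> V"
  obtains C where "graded_subspace A C" "C \<subseteq> V" "U \<inter> C \<subseteq> {0}" "\<forall>x\<in>V. \<exists>u\<in>U. \<exists>c\<in>C. x = u + c"
proof -
  have sub: "subspace (W \<inter> ev A)" "subspace (W \<inter> od A)" if "graded_subspace A W" for W
    using that subspace_inter[OF _ subspace_ev] subspace_inter[OF _ subspace_od]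
    unfolding graded_subspace_def by simp_all
  have UV_ev: "U \<inter> ev A \<subseteq> V \<inter> ev A" and UV_od: "U \<inter> od A \<subseteq> V \<inter> od A" using UV by blast+
  obtain C0 where C0: "subspace C0" "C0 \<subseteq> V \<inter> ev A" "U \<inter> ev A \<inter> C0 \<subseteq> {0}"
      "\<forall>x\<in>V \<inter> ev A. \<exists>u\<in>U \<inter> ev A. \<exists>c\<in>C0. x = u + c"
    by (rule subspace_complement_exists[OF sub(1)[OF U] sub(1)[OF V] UV_ev])
  obtain C1 where C1: "subspace C1" "C1 \<subseteq> V \<inter> od A" "U \<inter> od A \<inter> C1 \<subseteq> {0}"
      "\<forall>x\<in>V \<inter> od A. \<exists>u\<in>U \<inter> od A. \<exists>c\<in>C1. x = u + c"
    by (rule subspace_complement_exists[OF sub(2)[OF U] sub(2)[OF V] UV_od])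
  define C where "C = {x + y | x y. x \<in> C0 \<and> y \<in> C1}"
  have "graded_subspace A C"
    unfolding C_def by (rule graded_subspace_sums_homogeneous) (use C0 C1 in auto)
  moreover have "C \<subseteq> V"
  proof
    fix x assume "x \<in> C"
    then obtain a b where "a \<in> V" "b \<in> V" "x = a + b" using C0(2) C1(2) unfolding C_def by blast
    then show "x \<in> V" using V subspace_add unfolding graded_subspace_def by blast
  qed
  moreover have "U \<inter> C \<subseteq> {0}"
  proof
    fix x assume x: "x \<in> U \<inter> C"
    then obtain a b where ab: "a \<in> C0" "b \<in> C1" "x = a + b" unfolding C_def by blast
    then have "a \<in> U" "b \<in> U" using graded_subspace_components[OF U] C0(2) C1(2) x by blast+
    then have "a = 0" "b = 0" using ab C0 C1 by blast+
    then show "x \<in> {0}" using ab by simp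
  qed
  moreover have "\<exists>u\<in>U. \<exists>c\<in>C. x = u + c" if x: "x \<in> V" for x
  proof -
    obtain a b where ab: "a \<in> V \<inter> ev A" "b \<in> V \<inter> od A" "x = a + b"
      using V x unfolding graded_subspace_def by blast
    obtain u0 c0 u1 c1 where "u0 \<in> U" "c0 \<in> C0" "a = u0 + c0" "u1 \<in> U" "c1 \<in> C1" "b = u1 + c1"
      using C0(4) C1(4) ab by blast
    moreover have "x = (u0 + u1) + (c0 + c1)" using ab calculation by (simp add: algebra_simps)
    ultimately show ?thesis using U subspace_add unfolding C_def graded_subspace_def by blast
  qed
  ultimately show ?thesis using that by blast
qed

lemma graded_subspace_lsa_ker:
  assumes B: "lie_superalgebra B" and f: "lsa_hom A B f"
  shows "graded_subspace A (lsa_ker A f)"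
proof -
  interpret B: lie_superalg B by (rule lie_superalg.intro[OF B])
  have f_add: "f (x + y) = f x + f y" and f_scale: "f (sc A c x) = sc B c (f x)"
    if "x \<in> carr A" "y \<in> carr A" for x y c
    using f that unfolding lsa_hom_def by blast+
  have "subspace (lsa_ker A f)"
    unfolding subspace_def lsa_ker_def
    using zero_carr lsa_hom_zero[OF f] carr_add carr_scale f_add f_scale by simp
  moreover have "\<exists>a b. a \<in> lsa_ker A f \<inter> ev A \<and> b \<in> lsa_ker A f \<inter> od A \<and> x = a + b"
    if x: "x \<in> lsa_ker A f" for x
  proof -
    have "x \<in> carr A" using x by (simp add: lsa_ker_def)
    then obtain a b where ab: "a \<in> ev A" "b \<in> od A" "x = a + b" using carr_decomp by blast
    have "f a + f b = 0" using x ab f_add ev_carr od_carr by (auto simp: lsa_ker_def)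
    moreover have "f a \<in> par B False" "f b \<in> par B True" using f ab unfolding lsa_hom_def by auto
    ultimately have "f a = 0" "f b = 0" using B.homogeneous_sum_eq_zero[of "f a" False "f b"] by auto
    then show ?thesis using ab ev_carr od_carr by (auto simp: lsa_ker_def)
  qed
  ultimately show ?thesis unfolding graded_subspace_def lsa_ker_def by blast
qed

lemma graded_subspace_brs:
  assumes I: "graded_subspace A I" and J: "graded_subspace A J"
  shows "graded_subspace A (brs A I J)"
proof -
  let ?G = "{br A a b | a b. a \<in> I \<and> b \<in> J}"
  let ?H = "{br A a b | a b p q. a \<in> I \<inter> par A p \<and> b \<in> J \<inter> par A q}"
  have IJ: "I \<subseteq> carr A" "J \<subseteq> carr A" using I J unfolding graded_subspace_def by auto
  have "?H \<subseteq> ev A \<union> od A"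
  proof
    fix w assume "w \<in> ?H"
    then obtain a b p q where "w = br A a b" "a \<in> par A p" "b \<in> par A q" by blast
    then have "w \<in> par A (p \<noteq> q)" using br_par by blast
    then show "w \<in> ev A \<union> od A" by (cases "p \<noteq> q") auto
  qed
  moreover have "?G \<subseteq> span ?H"
  proof
    fix w assume "w \<in> ?G"
    then obtain a b where ab: "a \<in> I" "b \<in> J" "w = br A a b" by blast
    obtain a0 a1 where a: "a0 \<in> I \<inter> ev A" "a1 \<in> I \<inter> od A" "a = a0 + a1"
      using I ab unfolding graded_subspace_def by blast
    obtain b0 b1 where b: "b0 \<in> J \<inter> ev A" "b1 \<in> J \<inter> od A" "b = b0 + b1"
      using J ab unfolding graded_subspace_def by blast
    have c: "a0 \<in> carr A" "a1 \<in> carr A" "b0 \<in> carr A" "b1 \<in> carr A" using a b IJ by auto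
    have "a0 \<in> I \<inter> par A False" "a1 \<in> I \<inter> par A True"
      "b0 \<in> J \<inter> par A False" "b1 \<in> J \<inter> par A True" using a b by simp_all
    then have "br A a0 b0 \<in> ?H" "br A a0 b1 \<in> ?H" "br A a1 b0 \<in> ?H" "br A a1 b1 \<in> ?H" by blast+
    moreover have "w = (br A a0 b0 + br A a0 b1) + (br A a1 b0 + br A a1 b1)"
      using ab a b br_add_left[OF c(1,2) carr_add[OF c(3,4)]] br_add_right[OF c(3,4)] c by simp
    ultimately show "w \<in> span ?H" using span_add span_base by simp
  qed
  then have "span ?G = span ?H"
    using span_mono[of ?H ?G] span_minimal[of ?G "span ?H"] by blast
  ultimately show ?thesis unfolding brs_def using graded_subspace_span by simp
qed

lemma br_swap_in_brs:
  assumes J: "graded_subspace A J" and x: "x \<in> carr A" and r: "r \<in> J"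
  shows "br A r x \<in> brs A (carr A) J"
proof -
  have homogeneous: "br A u v \<in> brs A (carr A) J" if u: "u \<in> J \<inter> par A p" and v: "v \<in> par A q" for u v p q
  proof -
    have "br A v u \<in> brs A (carr A) J"
      unfolding brs_def using u par_carr[OF v] by (blast intro: span_base)
    then have "- sgn_if (p \<and> q) (br A v u) \<in> brs A (carr A) J"
      unfolding brs_def sgn_if_def using span_neg by auto
    then show ?thesis using br_skew[of u p v q] u v by simp
  qed
  obtain r0 r1 where rr: "r0 \<in> J \<inter> ev A" "r1 \<in> J \<inter> od A" "r = r0 + r1"
    using J r unfolding graded_subspace_def by blast
  obtain x0 x1 where xx: "x0 \<in> ev A" "x1 \<in> od A" "x = x0 + x1" using carr_decomp[OF x] by blast
  have c: "r0 \<in> carr A" "r1 \<in> carr A" "x0 \<in> carr A" "x1 \<in> carr A"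
    using rr xx ev_carr od_carr by auto
  have "br A r x = (br A r0 x0 + br A r0 x1) + (br A r1 x0 + br A r1 x1)"
    using rr xx br_add_left[OF c(1,2) carr_add[OF c(3,4)]] br_add_right[OF c(3,4)] c by simp
  moreover have "br A r0 x0 \<in> brs A (carr A) J" "br A r0 x1 \<in> brs A (carr A) J"
    "br A r1 x0 \<in> brs A (carr A) J" "br A r1 x1 \<in> brs A (carr A) J"
    using homogeneous[of r0 False x0 False] homogeneous[of r0 False x1 True]
      homogeneous[of r1 True x0 False] homogeneous[of r1 True x1 True] rr xx by simp_all
  ultimately show ?thesis by (simp only: subspace_add[OF subspace_brs])
qed

lemma graded_ideal_lsa_ker:
  assumes L: "lie_superalgebra L" and f: "lsa_hom A L f"
  shows "graded_ideal A (lsa_ker A f)"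
proof -
  interpret L: lie_superalg L by (rule lie_superalg.intro[OF L])
  have "f (br A x r) = 0 \<and> f (br A r x) = 0" if "x \<in> carr A" "r \<in> lsa_ker A f" for x r
    using that lsa_hom_br[OF f] lsa_hom_carr[OF f] L.br_zero_left L.br_zero_right
    by (auto simp: lsa_ker_def)
  then show ?thesis
    using graded_subspace_lsa_ker[OF L f] br_closed unfolding graded_ideal_def lsa_ker_def by auto
qed

lemma exists_graded_supplement:
  assumes I: "graded_subspace A I" and U: "graded_subspace A U" and R: "graded_subspace A R"
    and IU: "I \<subseteq> U" and UR: "U \<subseteq> R"
  obtains M where "graded_subspace A M" "I \<subseteq> M" "M \<subseteq> R" "M \<inter> U \<subseteq> I" "\<forall>r\<in>R. \<exists>u\<in>U. r - u \<in> M"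
proof -
  obtain S where S: "graded_subspace A S" "S \<subseteq> R" "U \<inter> S \<subseteq> {0}" "\<forall>x\<in>R. \<exists>u\<in>U. \<exists>c\<in>S. x = u + c"
    by (rule graded_subspace_complement[OF U R UR])
  define M where "M = {x + y | x y. x \<in> I \<and> y \<in> S}"
  have sub: "subspace I" "subspace U" "subspace R" and S0: "0 \<in> S"
    using I U R S(1) subspace_0 unfolding graded_subspace_def by blast+
  have I_M: "I \<subseteq> M"
  proof
    fix x assume "x \<in> I"
    then have "x + 0 \<in> M" unfolding M_def using S0 by blast
    then show "x \<in> M" by simp
  qed
  have S_M: "S \<subseteq> M"
  proof
    fix x assume "x \<in> S"
    then have "0 + x \<in> M" unfolding M_def using subspace_0[OF sub(1)] by blast
    then show "x \<in> M" by simp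
  qed
  have M_R: "M \<subseteq> R"
  proof
    fix x assume "x \<in> M"
    then obtain a b where "a \<in> R" "b \<in> R" "x = a + b" using IU UR S(2) unfolding M_def by blast
    then show "x \<in> R" using subspace_add[OF sub(3)] by simp
  qed
  have "M \<inter> U \<subseteq> I"
  proof
    fix x assume x: "x \<in> M \<inter> U"
    then obtain a b where ab: "a \<in> I" "b \<in> S" "x = a + b" unfolding M_def by blast
    have "b = x - a" using ab(3) by simp
    then have "b \<in> U" using subspace_diff[OF sub(2)] x ab(1) IU by blast
    then have "b = 0" using S(3) ab(2) by blast
    then show "x \<in> I" using ab by simp
  qed
  moreover have "\<exists>u\<in>U. r - u \<in> M" if "r \<in> R" for r
    using S(4) S_M that by force
  moreover have "graded_subspace A M" unfolding M_def by (rule graded_subspace_sums[OF I S(1)])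
  ultimately show ?thesis using that I_M M_R by blast
qed

lemma exists_graded_ideal_supplement:
  assumes R: "graded_ideal A R"
  obtains M where "graded_ideal A M" "M \<subseteq> R" "brs A (carr A) R \<subseteq> M"
    "M \<inter> brs A (carr A) (carr A) \<subseteq> brs A (carr A) R"
    "\<forall>r\<in>R. \<exists>u\<in>R \<inter> brs A (carr A) (carr A). r - u \<in> M"
proof -
  let ?A' = "brs A (carr A) (carr A)" and ?AR = "brs A (carr A) R"
  have R_graded: "graded_subspace A R" using R unfolding graded_ideal_def by blast
  have R_carr: "R \<subseteq> carr A" using R_graded unfolding graded_subspace_def by blast
  have "?AR \<subseteq> R"
    unfolding brs_def using R R_graded
    by (intro span_minimal) (auto simp: graded_ideal_def graded_subspace_def)
  moreover have "?AR \<subseteq> ?A'" unfolding brs_def using R_carr by (intro span_mono) blast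
  ultimately have AR_U: "?AR \<subseteq> R \<inter> ?A'" by blast
  obtain M where M: "graded_subspace A M" "?AR \<subseteq> M" "M \<subseteq> R" "M \<inter> (R \<inter> ?A') \<subseteq> ?AR"
      "\<forall>r\<in>R. \<exists>u\<in>R \<inter> ?A'. r - u \<in> M"
    by (rule exists_graded_supplement[OF graded_subspace_brs[OF graded_subspace_carr R_graded]
        graded_subspace_Int[OF R_graded graded_subspace_brs[OF graded_subspace_carr graded_subspace_carr]]
        R_graded AR_U Int_lower1])
  have "br A x m \<in> M \<and> br A m x \<in> M" if x: "x \<in> carr A" and m: "m \<in> M" for x m
  proof -
    have "br A x m \<in> ?AR" unfolding brs_def using x m M(3) by (blast intro: span_base)
    moreover have "br A m x \<in> ?AR" using br_swap_in_brs[OF R_graded x] m M(3) by blast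
    ultimately show ?thesis using M(2) by blast
  qed
  then have "graded_ideal A M" unfolding graded_ideal_def using M(1) by blast
  moreover have "M \<inter> ?A' \<subseteq> ?AR" using M(3,4) by blast
  ultimately show ?thesis using that M(2,3,5) by blast
qed

end

section \<open>Central extensions\<close>

context lie_superalg
begin

lemma lsa_hom_brs_center_eq_0:
  assumes K: "lie_superalgebra K" and f: "lsa_hom A K f" and J: "J \<subseteq> carr A"
    and central: "f ` J \<subseteq> center K" and x: "x \<in> brs A (carr A) J"
  shows "f x = 0"
proof -
  interpret K: lie_superalg K by (rule lie_superalg.intro[OF K])
  have "brs K (f ` carr A) (f ` J) \<subseteq> {0}"
    unfolding brs_def
    using K.center_br_right central lsa_hom_carr[OF f]
    by (intro K.span_minimal) (auto simp: subset_iff)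
  then show ?thesis using lsa_hom_image_brs[OF K f subset_refl J] x by blast
qed

lemma brs_carr_eq_of_center_supplement:
  assumes V: "V \<subseteq> carr A" and supplement: "\<forall>x\<in>carr A. \<exists>v\<in>V. x - v \<in> center A"
  shows "brs A (carr A) (carr A) = brs A V V"
proof
  have "br A a b \<in> {br A v w | v w. v \<in> V \<and> w \<in> V}" if a: "a \<in> carr A" and b: "b \<in> carr A" for a b
  proof -
    obtain v w where v: "v \<in> V" "a - v \<in> center A" and w: "w \<in> V" "b - w \<in> center A"
      using supplement a b by blast
    have c: "v \<in> carr A" "w \<in> carr A" "a - v \<in> carr A" "b - w \<in> carr A"
      using v w V by (auto simp: center_def)
    have "br A a b = br A v b + br A (a - v) b"
      using br_add_left[OF c(1,3) b] by simp
    also have "\<dots> = br A v w + br A v (b - w)"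
      using br_add_right[OF c(2,4) c(1)] center_br_left[OF v(2) b] by simp
    also have "\<dots> = br A v w"
      using center_br_right[OF w(2) c(1)] by simp
    finally show ?thesis using v w by blast
  qed
  then show "brs A (carr A) (carr A) \<subseteq> brs A V V"
    unfolding brs_def by (intro span_mono) blast
next
  show "brs A V V \<subseteq> brs A (carr A) (carr A)"
    unfolding brs_def using V by (intro span_mono) blast
qed

lemma central_ker_commutator_subset_image:
  assumes F: "lie_superalgebra F" and beta: "lsa_hom F A \<beta>" and psi: "lsa_hom A L \<psi>"
    and central: "lsa_ker A \<psi> \<subseteq> center A"
    and onto: "\<phi> ` carr F = carr L" and comm: "\<forall>x\<in>carr F. \<psi> (\<beta> x) = \<phi> x"
  shows "lsa_ker A \<psi> \<inter> brs A (carr A) (carr A) \<subseteq> \<beta> ` (brs F (carr F) (carr F) \<inter> lsa_ker F \<phi>)"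
proof -
  interpret F: lie_superalg F by (rule lie_superalg.intro[OF F])
  have beta_F: "\<beta> ` carr F \<subseteq> carr A" using lsa_hom_carr[OF beta] by blast
  have "\<exists>v\<in>\<beta> ` carr F. k - v \<in> center A" if k: "k \<in> carr A" for k
  proof -
    obtain f where f: "f \<in> carr F" "\<phi> f = \<psi> k" using onto lsa_hom_carr[OF psi k] by force
    then have "\<psi> (k - \<beta> f) = 0" using lsa_hom_diff[OF psi k] beta_F comm by auto
    moreover have "k - \<beta> f \<in> carr A" using carr_diff[OF k] beta_F f(1) by blast
    ultimately have "k - \<beta> f \<in> center A" using central by (auto simp: lsa_ker_def)
    then show ?thesis using f by blast
  qed
  then have "brs A (carr A) (carr A) = \<beta> ` brs F (carr F) (carr F)"
    using brs_carr_eq_of_center_supplement[OF beta_F] F.lsa_hom_image_brs[OF lie_superalgebra beta]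
    by simp
  moreover have "brs F (carr F) (carr F) \<subseteq> carr F" by (simp add: F.brs_subset_carr)
  ultimately show ?thesis using comm unfolding lsa_ker_def by auto
qed

lemma finite_basis_ker_of_in_C:
  assumes L: "lie_superalgebra L" "finite_dim L" and C: "in_C L A lam"
  obtains B where "finite B" "B \<subseteq> lsa_ker A lam" "independent B" "lsa_ker A lam \<subseteq> span B"
    "card B = dim (lsa_ker A lam)"
proof -
  interpret L: lie_superalg L by (rule lie_superalg.intro[OF L(1)])
  have hom: "lsa_hom A L lam" "lam ` carr A = carr L"
    and ker: "lsa_ker A lam \<subseteq> brs A (carr A) (carr A) \<inter> center A"
    using C unfolding in_C_def by blast+
  obtain BL where BL: "finite BL" "BL \<subseteq> carr L" "carr L \<subseteq> L.span BL"
    using L(2) unfolding finite_dim_def by blast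
  obtain C0 where C0: "C0 \<subseteq> carr A" "finite C0" "BL = lam ` C0"
    using finite_subset_image[OF BL(1)] BL(2) hom(2) by metis
  have "\<exists>v\<in>span C0. t - v \<in> center A" if t: "t \<in> carr A" for t
  proof -
    have "lam t \<in> lam ` span C0"
      using lsa_hom_image_span[OF L(1) hom(1) C0(1)] BL(3) C0(3) hom(2) t by blast
    then obtain v where v: "v \<in> span C0" "lam v = lam t" by auto
    have vc: "v \<in> carr A" using v(1) span_subset_carr[OF C0(1)] by blast
    have "lam (t - v) = 0" using lsa_hom_diff[OF hom(1) t vc] v(2) by simp
    then have "t - v \<in> center A" using ker carr_diff[OF t vc] unfolding lsa_ker_def by blast
    then show ?thesis using v(1) by blast
  qed
  then have "brs A (carr A) (carr A) = brs A C0 C0"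
    using brs_carr_eq_of_center_supplement[OF span_subset_carr[OF C0(1)]] brs_span[OF C0(1) C0(1)]
    by simp
  moreover have G: "finite {br A c d | c d. c \<in> C0 \<and> d \<in> C0}"
    using finite_image_set2[of "\<lambda>c. c \<in> C0" "\<lambda>d. d \<in> C0"] C0(2) by simp
  ultimately have ker_G: "lsa_ker A lam \<subseteq> span {br A c d | c d. c \<in> C0 \<and> d \<in> C0}"
    using ker unfolding brs_def by blast
  obtain B where B: "B \<subseteq> lsa_ker A lam" "independent B" "lsa_ker A lam \<subseteq> span B"
      "card B = dim (lsa_ker A lam)"
    by (rule basis_exists)
  then show ?thesis using that independent_span_bound[OF G B(2)] ker_G by blast
qed

end

lemma universal_ker_onto:
  fixes T :: "('k::field, 't::ab_group_add) lsa" and K :: "('k, 'm::ab_group_add) lsa"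
  assumes universal: "universal_wrt TYPE('m) L T lam" and K: "in_C L K psi"
  obtains tau where "lsa_hom T K tau" "lsa_ker K psi = tau ` lsa_ker T lam"
proof -
  have T: "in_C L T lam" and "\<exists>tau. lsa_hom T K tau \<and> (\<forall>x\<in>carr T. psi (tau x) = lam x)"
    using universal K unfolding universal_wrt_def by blast+
  then obtain tau where tau: "lsa_hom T K tau" "\<forall>x\<in>carr T. psi (tau x) = lam x" by blast
  have T_lie: "lie_superalgebra T" and lam_onto: "lam ` carr T = carr L"
    using T unfolding in_C_def by blast+
  have K_lie: "lie_superalgebra K" and psi: "lsa_hom K L psi"
    and ker: "lsa_ker K psi \<subseteq> brs K (carr K) (carr K) \<inter> center K"
    using K unfolding in_C_def by blast+
  interpret K: lie_superalg K by (rule lie_superalg.intro[OF K_lie])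
  have "lsa_ker K psi \<subseteq> tau ` (brs T (carr T) (carr T) \<inter> lsa_ker T lam)"
    using K.central_ker_commutator_subset_image[OF T_lie tau(1) psi _ lam_onto tau(2)] ker by blast
  moreover have "tau ` lsa_ker T lam \<subseteq> lsa_ker K psi"
    using tau lsa_hom_carr[OF tau(1)] by (auto simp: lsa_ker_def)
  ultimately show ?thesis using that tau(1) by blast
qed

section \<open>Quotients by graded ideals\<close>

(* A/M is realised on a graded complement W of M, with bracket proj o br, so that it lives in the
   ambient type of A: universal_wrt only tests against extensions of that type. *)
locale lsa_quotient = lie_superalg A for A :: "('k::field, 'a::ab_group_add) lsa" +
  fixes M W :: "'a set"
  assumes ideal: "graded_ideal A M"
    and complement: "graded_subspace A W" "M \<inter> W \<subseteq> {0}" "\<forall>x\<in>carr A. \<exists>u\<in>M. \<exists>w\<in>W. x = u + w"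

begin

definition proj :: "'a \<Rightarrow> 'a" where
  "proj x = (THE w. w \<in> W \<and> x - w \<in> M)"

definition quot :: "('k, 'a) lsa" where
  "quot = \<lparr>sc = sc A, carr = W, ev = W \<inter> ev A, od = W \<inter> od A, br = (\<lambda>x y. proj (br A x y))\<rparr>"

lemma quot_simps [simp]:
  "sc quot = sc A" "carr quot = W" "ev quot = W \<inter> ev A" "od quot = W \<inter> od A"
  "br quot x y = proj (br A x y)"
  by (simp_all add: quot_def)

lemma par_quot [simp]: "par quot p = W \<inter> par A p"
  by (cases p) simp_all

lemma subspace_M: "subspace M" and subspace_W: "subspace W" and W_carr: "W \<subseteq> carr A"
  using ideal complement(1) unfolding graded_ideal_def graded_subspace_def by blast+

lemma br_M: "x \<in> carr A \<Longrightarrow> m \<in> M \<Longrightarrow> br A x m \<in> M \<and> br A m x \<in> M"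
  using ideal unfolding graded_ideal_def by blast

lemma proj_unique: "w \<in> W \<Longrightarrow> w' \<in> W \<Longrightarrow> x - w \<in> M \<Longrightarrow> x - w' \<in> M \<Longrightarrow> w = w'"
proof -
  assume w: "w \<in> W" "w' \<in> W" and "x - w \<in> M" "x - w' \<in> M"
  then have "w' - w \<in> M" using subspace_diff[OF subspace_M] by fastforce
  moreover have "w' - w \<in> W" using subspace_diff[OF subspace_W w(2,1)] .
  ultimately show "w = w'" using complement(2) by auto
qed

lemma proj_spec: "x \<in> carr A \<Longrightarrow> proj x \<in> W \<and> x - proj x \<in> M"
proof -
  assume "x \<in> carr A"
  then obtain u w where "u \<in> M" "w \<in> W" "x = u + w" using complement(3) by blast
  then have w: "w \<in> W \<and> x - w \<in> M" by simp
  then show ?thesis unfolding proj_def by (rule theI) (use proj_unique w in blast)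
qed

lemma proj_eqI: "x \<in> carr A \<Longrightarrow> w \<in> W \<Longrightarrow> x - w \<in> M \<Longrightarrow> proj x = w"
  using proj_spec proj_unique by blast

lemma proj_carr: "x \<in> carr A \<Longrightarrow> proj x \<in> carr A"
  using proj_spec W_carr by blast

lemma proj_cong:
  assumes x: "x \<in> carr A" and y: "y \<in> carr A" and "x - y \<in> M"
  shows "proj x = proj y"
proof (rule proj_eqI[OF x])
  show "proj y \<in> W" using proj_spec[OF y] by blast
  have "x - proj y = (x - y) + (y - proj y)" by simp
  then show "x - proj y \<in> M" using subspace_add[OF subspace_M] proj_spec[OF y] assms(3) by metis
qed

lemma proj_W: assumes "w \<in> W" shows "proj w = w"
  using proj_eqI[of w w] assms W_carr subspace_0[OF subspace_M] by (simp add: subset_iff)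

lemma proj_eq_0_iff: assumes x: "x \<in> carr A" shows "proj x = 0 \<longleftrightarrow> x \<in> M"
  using proj_spec[OF x] proj_eqI[OF x subspace_0[OF subspace_W]] by auto

lemma proj_add: "x \<in> carr A \<Longrightarrow> y \<in> carr A \<Longrightarrow> proj (x + y) = proj x + proj y"
proof -
  assume x: "x \<in> carr A" and y: "y \<in> carr A"
  have "x + y - (proj x + proj y) = (x - proj x) + (y - proj y)" by simp
  then have "x + y - (proj x + proj y) \<in> M" using subspace_add[OF subspace_M] proj_spec x y by metis
  moreover have "proj x + proj y \<in> W" using subspace_add[OF subspace_W] proj_spec x y by blast
  ultimately show ?thesis using proj_eqI carr_add[OF x y] by blast
qed

lemma proj_scale: "x \<in> carr A \<Longrightarrow> proj (sc A c x) = sc A c (proj x)"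
proof -
  assume x: "x \<in> carr A"
  have "sc A c x - sc A c (proj x) = sc A c (x - proj x)" by (simp add: scale_right_diff_distrib)
  then have "sc A c x - sc A c (proj x) \<in> M" using subspace_scale[OF subspace_M] proj_spec[OF x] by metis
  moreover have "sc A c (proj x) \<in> W" using subspace_scale[OF subspace_W] proj_spec[OF x] by blast
  ultimately show ?thesis using proj_eqI carr_scale[OF x] by blast
qed

lemma proj_neg: "x \<in> carr A \<Longrightarrow> proj (- x) = - proj x"
  using proj_scale[of x "- 1"] by (simp add: scale_minus_left)

lemma proj_sgn_if: "x \<in> carr A \<Longrightarrow> proj (sgn_if b x) = sgn_if b (proj x)"
  using proj_neg by (cases b) simp_all

lemma proj_par:
  assumes x: "x \<in> par A p"
  shows "proj x \<in> par A p"
proof -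
  have xc: "x \<in> carr A" using par_carr[OF x] .
  obtain w0 w1 where w: "w0 \<in> W \<inter> ev A" "w1 \<in> W \<inter> od A" "proj x = w0 + w1"
    using complement(1) proj_spec[OF xc] unfolding graded_subspace_def by blast
  have M_graded: "graded_subspace A M" using ideal unfolding graded_ideal_def by blast
  have xM: "x - proj x \<in> M" using proj_spec[OF xc] by blast
  show ?thesis
  proof (cases p)
    case False
    have "x - proj x = (x - w0) + (- w1)" using w(3) by simp
    moreover have "x - w0 \<in> ev A" "- w1 \<in> od A"
      using par_diff[of x False w0] par_neg[of w1 True] x False w by simp_all
    ultimately have "- w1 \<in> M" using graded_subspace_components(2)[OF M_graded] xM by metis
    then have "w1 \<in> M \<inter> W" using subspace_neg[OF subspace_M] w(2) by fastforce
    then show ?thesis using complement(2) w False by auto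
  next
    case True
    have "x - proj x = (- w0) + (x - w1)" using w(3) by simp
    moreover have "- w0 \<in> ev A" "x - w1 \<in> od A"
      using par_neg[of w0 False] par_diff[of x True w1] x True w by simp_all
    ultimately have "- w0 \<in> M" using graded_subspace_components(1)[OF M_graded] xM by metis
    then have "w0 \<in> M \<inter> W" using subspace_neg[OF subspace_M] w(1) by fastforce
    then show ?thesis using complement(2) w True by auto
  qed
qed

lemma proj_br_left: "x \<in> carr A \<Longrightarrow> y \<in> carr A \<Longrightarrow> proj (br A (proj x) y) = proj (br A x y)"
proof -
  assume x: "x \<in> carr A" and y: "y \<in> carr A"
  have "br A (proj x) y - br A x y = - br A (x - proj x) y"
    using br_diff_left[OF x proj_carr[OF x] y] by simp
  moreover have "br A (x - proj x) y \<in> M" using br_M[OF y] proj_spec[OF x] by blast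
  ultimately have "br A (proj x) y - br A x y \<in> M" using subspace_neg[OF subspace_M] by metis
  then show ?thesis using proj_cong br_closed proj_carr x y by blast
qed

lemma proj_br_right: "x \<in> carr A \<Longrightarrow> y \<in> carr A \<Longrightarrow> proj (br A x (proj y)) = proj (br A x y)"
proof -
  assume x: "x \<in> carr A" and y: "y \<in> carr A"
  have "br A x (proj y) - br A x y = - br A x (y - proj y)"
    using br_diff_right[OF y proj_carr[OF y] x] by simp
  moreover have "br A x (y - proj y) \<in> M" using br_M[OF x] proj_spec[OF y] by blast
  ultimately have "br A x (proj y) - br A x y \<in> M" using subspace_neg[OF subspace_M] by metis
  then show ?thesis using proj_cong br_closed proj_carr x y by blast
qed

lemma br_quot_par:
  assumes "x \<in> par quot p" "y \<in> par quot q"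
  shows "br quot x y \<in> par quot (p \<noteq> q)"
proof -
  have "br A x y \<in> par A (p \<noteq> q)" using br_par assms by simp
  then show ?thesis using proj_spec par_carr proj_par by simp
qed

lemma br_quot_skew:
  assumes x: "x \<in> par quot p" and y: "y \<in> par quot q"
  shows "br quot x y = - sgn_if (p \<and> q) (br quot y x)"
proof -
  have "x \<in> carr A" "y \<in> carr A" using x y by (auto intro: par_carr)
  then have yx: "br A y x \<in> carr A" by (rule br_closed[rotated])
  have "br quot x y = proj (- sgn_if (p \<and> q) (br A y x))" using br_skew[of x p y q] x y by simp
  also have "\<dots> = - sgn_if (p \<and> q) (br quot y x)"
    using proj_neg[OF carr_sgn_if[OF yx]] proj_sgn_if[OF yx] by simp
  finally show ?thesis .
qed

lemma jacobi_quot: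
  assumes x: "x \<in> W \<inter> par A p" and y: "y \<in> W \<inter> par A q" and z: "z \<in> W \<inter> par A r"
  shows "sgn_if (p \<and> r) (br quot x (br quot y z)) + sgn_if (q \<and> p) (br quot y (br quot z x))
      + sgn_if (r \<and> q) (br quot z (br quot x y)) = 0"
proof -
  have c: "x \<in> carr A" "y \<in> carr A" "z \<in> carr A" using x y z W_carr by auto
  let ?a = "br A x (br A y z)" and ?b = "br A y (br A z x)" and ?c = "br A z (br A x y)"
  have abc: "?a \<in> carr A" "?b \<in> carr A" "?c \<in> carr A" using br_closed c by simp_all
  have "sgn_if (p \<and> r) (br quot x (br quot y z)) + sgn_if (q \<and> p) (br quot y (br quot z x))
      + sgn_if (r \<and> q) (br quot z (br quot x y))
      = sgn_if (p \<and> r) (proj ?a) + sgn_if (q \<and> p) (proj ?b) + sgn_if (r \<and> q) (proj ?c)"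
    using proj_br_right br_closed c by simp
  also have "\<dots> = proj (sgn_if (p \<and> r) ?a + sgn_if (q \<and> p) ?b + sgn_if (r \<and> q) ?c)"
    using proj_sgn_if proj_add carr_sgn_if carr_add abc by simp
  also have "\<dots> = 0"
    using jacobi[of x p y q z r] proj_eq_0_iff[OF zero_carr] subspace_0[OF subspace_M] x y z by simp
  finally show ?thesis .
qed

lemma lie_superalgebra_quot: "lie_superalgebra quot"
  unfolding lie_superalgebra_def
proof (intro conjI)
  show "vector_space (sc quot)" using vector_space_sc by simp
  show "module.subspace (sc quot) (carr quot)" using subspace_W by simp
  show "module.subspace (sc quot) (ev quot)" "module.subspace (sc quot) (od quot)"
    using subspace_inter[OF subspace_W] subspace_ev subspace_od by simp_all
  show "ev quot \<inter> od quot = {0}" using ev_inter_od subspace_0[OF subspace_W] by auto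
  show "carr quot = {x + y |x y. x \<in> ev quot \<and> y \<in> od quot}"
  proof (intro equalityI subsetI)
    fix x assume "x \<in> carr quot"
    then obtain a b where "a \<in> W \<inter> ev A" "b \<in> W \<inter> od A" "x = a + b"
      using complement(1) unfolding graded_subspace_def by auto
    then show "x \<in> {x + y |x y. x \<in> ev quot \<and> y \<in> od quot}" by auto
  qed (use subspace_add[OF subspace_W] in auto)
  show "\<forall>x\<in>carr quot. \<forall>y\<in>carr quot. br quot x y \<in> carr quot"
    using proj_spec br_closed W_carr by auto
  show "\<forall>x\<in>carr quot. \<forall>y\<in>carr quot. \<forall>z\<in>carr quot.
      br quot (x + y) z = br quot x z + br quot y z \<and> br quot z (x + y) = br quot z x + br quot z y"
    using proj_add br_closed br_add_left br_add_right W_carr by (auto simp: subset_iff)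
  show "\<forall>c. \<forall>x\<in>carr quot. \<forall>y\<in>carr quot.
      br quot (sc quot c x) y = sc quot c (br quot x y) \<and> br quot x (sc quot c y) = sc quot c (br quot x y)"
    using proj_scale br_closed br_scale_left br_scale_right W_carr by (auto simp: subset_iff)
  show "\<forall>p q. \<forall>x\<in>par quot p. \<forall>y\<in>par quot q. br quot x y \<in> par quot (p \<noteq> q)"
    using br_quot_par by blast
  show "\<forall>p q. \<forall>x\<in>par quot p. \<forall>y\<in>par quot q. br quot x y = - sgn_if (p \<and> q) (br quot y x)"
    using br_quot_skew by blast
  show "\<forall>p q r. \<forall>x\<in>par quot p. \<forall>y\<in>par quot q. \<forall>z\<in>par quot r.
      sgn_if (p \<and> r) (br quot x (br quot y z)) + sgn_if (q \<and> p) (br quot y (br quot z x))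
      + sgn_if (r \<and> q) (br quot z (br quot x y)) = 0"
    using jacobi_quot by simp
qed

lemma lsa_hom_proj: "lsa_hom A quot proj"
  unfolding lsa_hom_def
proof (intro conjI ballI allI)
  show "proj ` carr A \<subseteq> carr quot" using proj_spec by auto
  show "proj ` ev A \<subseteq> ev quot" "proj ` od A \<subseteq> od quot"
    using proj_spec ev_carr od_carr proj_par[of _ False] proj_par[of _ True] by auto
  fix x y c assume x: "x \<in> carr A" and y: "y \<in> carr A"
  show "proj (x + y) = proj x + proj y" using proj_add[OF x y] .
  show "proj (sc A c x) = sc quot c (proj x)" using proj_scale[OF x] by simp
  show "proj (br A x y) = br quot (proj x) (proj y)"
    using proj_br_left[OF x proj_carr[OF y]] proj_br_right[OF x y] by simp
qed

lemma proj_onto: "proj ` carr A = carr quot"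
proof
  show "carr quot \<subseteq> proj ` carr A"
  proof
    fix w assume "w \<in> carr quot"
    then have "w \<in> W" by simp
    then show "w \<in> proj ` carr A" using proj_W W_carr by (metis image_eqI subsetD)
  qed
qed (use proj_spec in auto)

lemma proj_factor:
  assumes f: "lsa_hom A L f" and M_ker: "M \<subseteq> lsa_ker A f" and x: "x \<in> carr A"
  shows "f (proj x) = f x"
proof -
  have "f (x - proj x) = 0" using proj_spec[OF x] M_ker by (auto simp: lsa_ker_def)
  then show ?thesis using lsa_hom_diff[OF f x proj_carr[OF x]] by simp
qed

lemma lsa_hom_quot:
  assumes f: "lsa_hom A L f" and M_ker: "M \<subseteq> lsa_ker A f"
  shows "lsa_hom quot L f"
  unfolding lsa_hom_def
proof (intro conjI ballI allI)
  show "f ` carr quot \<subseteq> carr L" "f ` ev quot \<subseteq> ev L" "f ` od quot \<subseteq> od L"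
    using lsa_hom_carr[OF f] lsa_hom_ev[OF f] lsa_hom_od[OF f] W_carr by auto
  fix x y c assume "x \<in> carr quot" "y \<in> carr quot"
  then have x: "x \<in> carr A" and y: "y \<in> carr A" using W_carr by auto
  show "f (x + y) = f x + f y" using lsa_hom_add[OF f x y] .
  show "f (sc quot c x) = sc L c (f x)" using lsa_hom_scale[OF f x] by simp
  show "f (br quot x y) = br L (f x) (f y)"
    using proj_factor[OF f M_ker br_closed[OF x y]] lsa_hom_br[OF f x y] by simp
qed

lemma lsa_ker_quot:
  assumes f: "lsa_hom A L f" and M_ker: "M \<subseteq> lsa_ker A f"
    and ker_cover: "\<forall>r\<in>lsa_ker A f. \<exists>u\<in>lsa_ker A f \<inter> brs A (carr A) (carr A). r - u \<in> M"
  shows "lsa_ker quot f = proj ` (lsa_ker A f \<inter> brs A (carr A) (carr A))"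
proof
  show "lsa_ker quot f \<subseteq> proj ` (lsa_ker A f \<inter> brs A (carr A) (carr A))"
  proof
    fix z assume "z \<in> lsa_ker quot f"
    then have z: "z \<in> W" "z \<in> lsa_ker A f" using W_carr by (auto simp: lsa_ker_def)
    then obtain u where u: "u \<in> lsa_ker A f \<inter> brs A (carr A) (carr A)" "z - u \<in> M"
      using ker_cover by blast
    have "z = proj u"
      using proj_W[OF z(1)] proj_cong[of z u] u W_carr z(1) by (auto simp: lsa_ker_def)
    then show "z \<in> proj ` (lsa_ker A f \<inter> brs A (carr A) (carr A))" using u(1) by blast
  qed
  show "proj ` (lsa_ker A f \<inter> brs A (carr A) (carr A)) \<subseteq> lsa_ker quot f"
    using proj_spec proj_factor[OF f M_ker] by (auto simp: lsa_ker_def)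
qed

lemma in_C_quot:
  assumes L: "lie_superalgebra L" and f: "lsa_hom A L f" "f ` carr A = carr L"
    and M_ker: "M \<subseteq> lsa_ker A f"
    and ker_cover: "\<forall>r\<in>lsa_ker A f. \<exists>u\<in>lsa_ker A f \<inter> brs A (carr A) (carr A). r - u \<in> M"
    and central: "\<forall>x\<in>carr A. \<forall>r\<in>lsa_ker A f. br A r x \<in> M"
  shows "in_C L quot f"
  unfolding in_C_def
proof (intro conjI)
  show "lie_superalgebra quot" by (rule lie_superalgebra_quot)
  show "lsa_hom quot L f" by (rule lsa_hom_quot[OF f(1) M_ker])
  show "f ` carr quot = carr L"
    using f(2) proj_onto proj_factor[OF f(1) M_ker] by (metis image_cong image_image)
  have commutator: "proj ` brs A (carr A) (carr A) = brs quot (carr quot) (carr quot)"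
    using lsa_hom_image_brs[OF lie_superalgebra_quot lsa_hom_proj] proj_onto by simp
  show "lsa_ker quot f \<subseteq> brs quot (carr quot) (carr quot) \<inter> center quot"
  proof
    fix z assume z: "z \<in> lsa_ker quot f"
    then have "z \<in> brs quot (carr quot) (carr quot)"
      using lsa_ker_quot[OF f(1) M_ker ker_cover] commutator by blast
    moreover have zW: "z \<in> W" and zR: "z \<in> lsa_ker A f" using z W_carr by (auto simp: lsa_ker_def)
    moreover have "br quot z x = 0" if "x \<in> carr quot" for x
    proof -
      have x: "x \<in> carr A" using that W_carr by auto
      then have "br A z x \<in> M" using central zR by blast
      then show ?thesis using proj_eq_0_iff br_closed[OF _ x] zW W_carr by auto
    qed
    ultimately show "z \<in> brs quot (carr quot) (carr quot) \<inter> center quot"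
      by (simp add: center_def)
  qed
qed

end

section \<open>Free Lie superalgebras\<close>

lemma free_wrt_lift:
  assumes free: "free_wrt TYPE('m::ab_group_add) F X0 X1"
    and M: "lie_superalgebra (M :: ('k::field, 'm) lsa)" and g: "g ` X0 \<subseteq> ev M" "g ` X1 \<subseteq> od M"
  obtains phi where "lsa_hom F M phi" "\<forall>x\<in>X0 \<union> X1. phi x = g x"
  using free M g unfolding free_wrt_def by blast

lemma free_wrt_unique:
  assumes free: "free_wrt TYPE('m::ab_group_add) F X0 X1" and M: "lie_superalgebra (M :: ('k::field, 'm) lsa)"
    and phi: "lsa_hom F M phi" "lsa_hom F M phi'" and agree: "\<forall>x\<in>X0 \<union> X1. phi x = phi' x"
  shows "\<forall>y\<in>carr F. phi y = phi' y"
proof -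
  have X: "X0 \<subseteq> ev F" "X1 \<subseteq> od F" using free unfolding free_wrt_def by blast+
  then have "lie_superalgebra M \<and> phi ` X0 \<subseteq> ev M \<and> phi ` X1 \<subseteq> od M"
    using M lsa_hom_ev[OF phi(1)] lsa_hom_od[OF phi(1)] by auto
  from free[unfolded free_wrt_def, THEN conjunct2, THEN conjunct2, THEN conjunct2, THEN conjunct2,
      THEN spec[of _ M], THEN spec[of _ phi], THEN mp, OF this, THEN conjunct2]
  show ?thesis using phi agree by simp
qed

lemma lift_homogeneous:
  assumes K: "lie_superalgebra K" and L: "lie_superalgebra L"
    and psi: "lsa_hom K L psi" "psi ` carr K = carr L" and l: "l \<in> par L p"
  shows "\<exists>k\<in>par K p. psi k = l"
proof -
  interpret K: lie_superalg K by (rule lie_superalg.intro[OF K])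
  interpret L: lie_superalg L by (rule lie_superalg.intro[OF L])
  obtain k where k: "k \<in> carr K" "psi k = l" using psi(2) L.par_carr[OF l] by force
  obtain k0 k1 where kk: "k0 \<in> ev K" "k1 \<in> od K" "k = k0 + k1" using K.carr_decomp[OF k(1)] by blast
  have images: "psi k0 \<in> ev L" "psi k1 \<in> od L" using lsa_hom_ev[OF psi(1)] lsa_hom_od[OF psi(1)] kk by auto
  have l_eq: "l = psi k0 + psi k1" using lsa_hom_add[OF psi(1)] kk k K.ev_carr K.od_carr by auto
  show ?thesis
  proof (cases p)
    case True
    then have "psi k1 = l"
      using L.decomp_unique[OF L.zero_ev _ images] l l_eq by auto
    then show ?thesis using kk True by auto
  next
    case False
    then have "psi k0 = l"
      using L.decomp_unique[OF _ L.zero_od images] l l_eq by auto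
    then show ?thesis using kk False by auto
  qed
qed

lemma free_lift:
  fixes F :: "('k::field, 'f::ab_group_add) lsa" and K :: "('k, 'kk::ab_group_add) lsa"
    and L :: "('k, 'l::ab_group_add) lsa"
  assumes free_K: "free_wrt TYPE('kk) F X0 X1" and free_L: "free_wrt TYPE('l) F X0 X1"
    and K: "lie_superalgebra K" and L: "lie_superalgebra L"
    and psi: "lsa_hom K L psi" "psi ` carr K = carr L" and pi: "lsa_hom F L pi"
  obtains beta where "lsa_hom F K beta" "\<forall>x\<in>carr F. psi (beta x) = pi x"
proof -
  have X: "X0 \<subseteq> ev F" "X1 \<subseteq> od F" "X0 \<inter> X1 = {}" using free_K unfolding free_wrt_def by blast+
  define g where "g x = (SOME k. k \<in> par K (x \<in> X1) \<and> psi k = pi x)" for x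
  have g: "g x \<in> par K (x \<in> X1) \<and> psi (g x) = pi x" if x: "x \<in> X0 \<union> X1" for x
  proof -
    have "x \<in> par F (x \<in> X1)" using x X by (cases "x \<in> X1") auto
    then have "\<exists>k. k \<in> par K (x \<in> X1) \<and> psi k = pi x"
      using lift_homogeneous[OF K L psi lsa_hom_par[OF pi]] by blast
    then show ?thesis unfolding g_def by (rule someI_ex)
  qed
  have "g x \<in> ev K" if "x \<in> X0" for x
  proof -
    have "x \<notin> X1" using X(3) that by blast
    then show ?thesis using g[of x] that by simp
  qed
  moreover have "g x \<in> od K" if "x \<in> X1" for x using g[of x] that by auto
  ultimately have "g ` X0 \<subseteq> ev K" "g ` X1 \<subseteq> od K" by blast+
  then obtain beta where beta: "lsa_hom F K beta" "\<forall>x\<in>X0 \<union> X1. beta x = g x"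
    by (rule free_wrt_lift[OF free_K K])
  have "\<forall>x\<in>carr F. psi (beta x) = pi x"
    by (rule free_wrt_unique[OF free_L L lsa_hom_comp[OF beta(1) psi(1)] pi]) (use beta(2) g in simp)
  then show ?thesis using that beta(1) by blast
qed

section \<open>The multiplier and the class C(L)\<close>

context lie_superalg
begin

lemma exists_in_C_ker_multiplier:
  assumes L: "lie_superalgebra L" and pi: "lsa_hom A L pi" "pi ` carr A = carr L"
  obtains K :: "('k, 'a) lsa" and P where "in_C L K pi" "lsa_hom A K P"
    "lsa_ker K pi = P ` (lsa_ker A pi \<inter> brs A (carr A) (carr A))"
    "\<forall>x\<in>lsa_ker A pi \<inter> brs A (carr A) (carr A). P x = 0 \<longrightarrow> x \<in> brs A (carr A) (lsa_ker A pi)"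
proof -
  let ?R = "lsa_ker A pi" and ?A' = "brs A (carr A) (carr A)"
  obtain M where M: "graded_ideal A M" "M \<subseteq> ?R" "brs A (carr A) ?R \<subseteq> M"
      "M \<inter> ?A' \<subseteq> brs A (carr A) ?R" "\<forall>r\<in>?R. \<exists>u\<in>?R \<inter> ?A'. r - u \<in> M"
    by (rule exists_graded_ideal_supplement[OF graded_ideal_lsa_ker[OF L pi(1)]])
  have M_graded: "graded_subspace A M" using M(1) unfolding graded_ideal_def by blast
  then have "M \<subseteq> carr A" unfolding graded_subspace_def by blast
  then obtain W where W: "graded_subspace A W" "W \<subseteq> carr A" "M \<inter> W \<subseteq> {0}"
      "\<forall>x\<in>carr A. \<exists>u\<in>M. \<exists>w\<in>W. x = u + w"
    by (rule graded_subspace_complement[OF M_graded graded_subspace_carr])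
  interpret Q: lsa_quotient A M W
    using M(1) W by unfold_locales auto
  have central: "\<forall>x\<in>carr A. \<forall>r\<in>?R. br A r x \<in> M"
    using br_swap_in_brs[OF graded_subspace_lsa_ker[OF L pi(1)]] M(3) by blast
  show ?thesis
  proof (rule that)
    show "in_C L Q.quot pi" by (rule Q.in_C_quot[OF L pi M(2) M(5) central])
    show "lsa_hom A Q.quot Q.proj" by (rule Q.lsa_hom_proj)
    show "lsa_ker Q.quot pi = Q.proj ` (?R \<inter> ?A')" by (rule Q.lsa_ker_quot[OF pi(1) M(2) M(5)])
    show "\<forall>x\<in>?R \<inter> ?A'. Q.proj x = 0 \<longrightarrow> x \<in> brs A (carr A) ?R"
      using Q.proj_eq_0_iff M(4) by (auto simp: lsa_ker_def)
  qed
qed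

end

lemma multiplier_dim_le_dim_ker_universal:
  fixes L :: "('k::field, 'l::ab_group_add) lsa" and F :: "('k, 'f::ab_group_add) lsa"
    and T :: "('k, 't::ab_group_add) lsa"
  assumes L: "lie_superalgebra L" "finite_dim L" and F: "lie_superalgebra F"
    and pi: "lsa_hom F L pi" "pi ` carr F = carr L"
    and universal: "universal_wrt TYPE('f) L T lam"
  shows "quot_dim (sc F) (lsa_ker F pi \<inter> brs F (carr F) (carr F)) (brs F (carr F) (lsa_ker F pi))
    \<le> vector_space.dim (sc T) (lsa_ker T lam)"
proof -
  interpret F: lie_superalg F by (rule lie_superalg.intro[OF F])
  let ?U = "lsa_ker F pi \<inter> brs F (carr F) (carr F)"
  obtain K :: "('k, 'f) lsa" and P where K: "in_C L K pi" and P: "lsa_hom F K P"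
      and ker_K: "lsa_ker K pi = P ` ?U"
      and ker_P: "\<forall>x\<in>?U. P x = 0 \<longrightarrow> x \<in> brs F (carr F) (lsa_ker F pi)"
    by (rule F.exists_in_C_ker_multiplier[OF L(1) pi])
  obtain tau where tau: "lsa_hom T K tau" and ker_tau: "lsa_ker K pi = tau ` lsa_ker T lam"
    by (rule universal_ker_onto[OF universal K])
  have T: "in_C L T lam" using universal unfolding universal_wrt_def by blast
  have T_lie: "lie_superalgebra T" and K_lie: "lie_superalgebra K"
    using T K unfolding in_C_def by blast+
  interpret T: lie_superalg T by (rule lie_superalg.intro[OF T_lie])
  interpret K: lie_superalg K by (rule lie_superalg.intro[OF K_lie])
  obtain B where B_fin: "finite B" and B: "B \<subseteq> lsa_ker T lam" "T.independent B"
      "lsa_ker T lam \<subseteq> T.span B" "card B = T.dim (lsa_ker T lam)"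
    by (rule T.finite_basis_ker_of_in_C[OF L T])
  have B_carr: "B \<subseteq> carr T" using B(1) by (auto simp: lsa_ker_def)
  have U_carr: "?U \<subseteq> carr F" by (auto simp: lsa_ker_def)
  have "quot_dim (sc F) ?U (brs F (carr F) (lsa_ker F pi)) \<le> card (tau ` B)"
  proof (rule quot_dim_le_card_image[OF F.module_sc K.module_sc _ _ _ _ _ _ ker_P])
    show "F.subspace ?U"
      using F.subspace_inter[OF _ F.subspace_brs] F.graded_subspace_lsa_ker[OF L(1) pi(1)]
      unfolding graded_subspace_def by blast
    show "\<forall>x\<in>?U. \<forall>y\<in>?U. P (x + y) = P x + P y" "\<forall>c. \<forall>x\<in>?U. P (sc F c x) = sc K c (P x)"
      using lsa_hom_add[OF P] lsa_hom_scale[OF P] U_carr by (auto simp: subset_iff)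
    show "finite (tau ` B)" using B_fin by simp
    show "tau ` B \<subseteq> P ` ?U" using B(1) ker_tau ker_K by blast
    show "P ` ?U \<subseteq> K.span (tau ` B)"
      using ker_K ker_tau B(3) T.lsa_hom_image_span[OF K_lie tau B_carr] by blast
  qed
  also have "\<dots> \<le> T.dim (lsa_ker T lam)" using card_image_le[OF B_fin] B(4) by simp
  finally show ?thesis .
qed

lemma multiplier_onto_ker_of_in_C:
  fixes L :: "('k::field, 'l::ab_group_add) lsa" and F :: "('k, 'f::ab_group_add) lsa"
    and K :: "('k, 'kk::ab_group_add) lsa"
  assumes L: "lie_superalgebra L" and free_L: "free_wrt TYPE('l) F X0 X1"
    and free_K: "free_wrt TYPE('kk) F X0 X1"
    and pi: "lsa_hom F L pi" "pi ` carr F = carr L" and K: "in_C L K psi"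
  shows "\<exists>h. quot_hom F (lsa_ker F pi \<inter> brs F (carr F) (carr F)) (brs F (carr F) (lsa_ker F pi)) K h
    \<and> h ` (lsa_ker F pi \<inter> brs F (carr F) (carr F)) = lsa_ker K psi"
proof -
  let ?R = "lsa_ker F pi" and ?F' = "brs F (carr F) (carr F)"
  have F_lie: "lie_superalgebra F" using free_K unfolding free_wrt_def by blast
  interpret F: lie_superalg F by (rule lie_superalg.intro[OF F_lie])
  have K_lie: "lie_superalgebra K" and psi: "lsa_hom K L psi" "psi ` carr K = carr L"
    and ker: "lsa_ker K psi \<subseteq> brs K (carr K) (carr K) \<inter> center K"
    using K unfolding in_C_def by blast+
  interpret K: lie_superalg K by (rule lie_superalg.intro[OF K_lie])
  obtain beta where beta: "lsa_hom F K beta" "\<forall>x\<in>carr F. psi (beta x) = pi x"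
    by (rule free_lift[OF free_K free_L K_lie L psi pi(1)])
  have R_carr: "?R \<subseteq> carr F" by (auto simp: lsa_ker_def)
  have beta_R: "beta ` ?R \<subseteq> lsa_ker K psi"
    using beta lsa_hom_carr[OF beta(1)] by (auto simp: lsa_ker_def)
  have "quot_hom F (?R \<inter> ?F') (brs F (carr F) ?R) K beta"
    using F.lsa_hom_brs_center_eq_0[OF K_lie beta(1) R_carr] beta_R ker R_carr
    by (intro quot_hom_of_lsa_hom[OF beta(1)]) auto
  moreover have "beta ` (?R \<inter> ?F') = lsa_ker K psi"
  proof
    show "beta ` (?R \<inter> ?F') \<subseteq> lsa_ker K psi" using beta_R by blast
    show "lsa_ker K psi \<subseteq> beta ` (?R \<inter> ?F')"
      using K.central_ker_commutator_subset_image[OF F_lie beta(1) psi(1) _ pi(2) beta(2)] ker by blast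
  qed
  ultimately show ?thesis by blast
qed

theorem lemma4p3:
  fixes L :: "('k::field, 'l::ab_group_add) lsa"
    and F :: "('k, 'f::ab_group_add) lsa"
    and pi :: "'f \<Rightarrow> 'l"
    and X0 X1 :: "'f set"
  assumes char: "(2::'k) \<noteq> 0" "(3::'k) \<noteq> 0"
    and L: "lie_superalgebra L" "finite_dim L"
    and free_l: "free_wrt TYPE('l) F X0 X1"
    and free_f: "free_wrt TYPE('f) F X0 X1"
    and free_k: "free_wrt TYPE('kk::ab_group_add) F X0 X1"
    and pi: "lsa_hom F L pi" "pi ` carr F = carr L"
  defines "R \<equiv> lsa_ker F pi"
    and "F' \<equiv> brs F (carr F) (carr F)"
    and "FR \<equiv> brs F (carr F) (lsa_ker F pi)"
  shows "(\<forall>(T :: ('k, 't::ab_group_add) lsa) lam.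
            universal_wrt TYPE('f) L T lam \<longrightarrow>
            quot_dim (sc F) (R \<inter> F') FR \<le> vector_space.dim (sc T) (lsa_ker T lam))
       \<and> (\<forall>(K :: ('k, 'kk) lsa) psi. in_C L K psi \<longrightarrow>
            (\<exists>h. quot_hom F (R \<inter> F') FR K h \<and> h ` (R \<inter> F') = lsa_ker K psi))"
proof -
  have F: "lie_superalgebra F" using free_k unfolding free_wrt_def by blast
  show ?thesis
    unfolding R_def F'_def FR_def
  proof (intro conjI allI impI)
    fix T :: "('k, 't) lsa" and lam
    assume "universal_wrt TYPE('f) L T lam"
    then show "quot_dim (sc F) (lsa_ker F pi \<inter> brs F (carr F) (carr F)) (brs F (carr F) (lsa_ker F pi))
        \<le> vector_space.dim (sc T) (lsa_ker T lam)"
      by (rule multiplier_dim_le_dim_ker_universal[OF L F pi])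
  next
    fix K :: "('k, 'kk) lsa" and psi
    assume "in_C L K psi"
    then show "\<exists>h. quot_hom F (lsa_ker F pi \<inter> brs F (carr F) (carr F)) (brs F (carr F) (lsa_ker F pi)) K h
        \<and> h ` (lsa_ker F pi \<inter> brs F (carr F) (carr F)) = lsa_ker K psi"
      by (rule multiplier_onto_ker_of_in_C[OF L(1) free_l free_k pi])
  qed
qed

end
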